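(* Let $M\cong\prec a_1,\ldots,a_m\succ$ and $N\cong\prec b_1,\ldots,b_n\succ$ be integral lattices relative to good BONGs, with $n\ge3$ odd and $m\ge n+1$. Suppose $R_{n-1}=-2e$ and $R_n=0$. If $\alpha_n=1$ and $d[-a_na_{n+1}]=1-R_{n+1}$, then $R_{n+1}-S_n+d[-a_{1,n+1}b_{1,n-1}]\le d[a_{1,n}b_{1,n}]$.
   Context: $F$ dyadic local field, $\mathcal O_F$, valuation $\operatorname{ord}$, $e=\operatorname{ord}(2)$, $d(c)=\operatorname{ord}(c^{-1}\mathfrak d(c))$ with quadratic defect $\mathfrak d(c)=\bigcap_{x\in F}(c-x^2)\mathcal O_F$. Integral: $Q(M)\subseteq\mathcal O_F$. BONGs: $x_1,\ldots,x_m\in FM$ is a BONG of $M$ if $x_1\in M$ with $Q(x_1)\mathcal O_F=\mathfrak nM$ and $x_2,\ldots,x_m$ is a BONG of the projection of $M$ onto $(Fx_1)^\perp$; good if $\operatorname{ord}Q(x_i)\le\operatorname{ord}Q(x_{i+2})$; $M\cong\prec a_1,\ldots,a_m\succ$ means $Q(x_i)=a_i$. $R_i=\operatorname{ord}(a_i)$, $S_i=\operatorname{ord}(b_i)$. $a_{i,j}=a_i\cdots a_j$, $a_{i,i-1}=1$, similarly $b_{i,j}$. For $1\le i\le m-1$, $\alpha_i=\min\{T_0,\ldots,T_{m-1}\}$ with $T_0=(R_{i+1}-R_i)/2+e$, $T_j=R_{i+1}-R_j+d(-a_ja_{j+1})$ ($1\le j\le i$), $T_j=R_{j+1}-R_i+d(-a_ja_{j+1})$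 ($i\le j\le m-1$); $\beta_i$ is defined likewise from $N$. For $0\le i-1\le j\le m$, $d[ca_{i,j}]=\min\{d(ca_{i,j}),\alpha_{i-1},\alpha_j\}$ ($\alpha_0,\alpha_m$ omitted). For $0\le i\le m$, $0\le j\le n$: $d[ca_{1,i}b_{1,j}]=\min\{d(ca_{1,i}b_{1,j}),\alpha_i,\beta_j\}$, $\alpha_i$ omitted if $i\in\{0,m\}$, $\beta_j$ omitted if $j\in\{0,n\}$. *)

theory Defs
  imports Complex_Main "HOL-Library.Extended_Real"
begin

text \<open>The field F is the type 'a; ord is the normalized discrete valuation
(its value at 0 is irrelevant; vord sends 0 to infinity).\<close>

definition intO :: "('a::field \<Rightarrow> int) \<Rightarrow> 'a set" where
  "intO ord = {y. y = 0 \<or> ord y \<ge> 0}"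

definition maxP :: "('a::field \<Rightarrow> int) \<Rightarrow> 'a set" where
  "maxP ord = {y. y = 0 \<or> ord y > 0}"

definition vord :: "('a::field \<Rightarrow> int) \<Rightarrow> 'a \<Rightarrow> ereal" where
  "vord ord x = (if x = 0 then \<infinity> else ereal (of_int (ord x)))"

definition dyadic_local_field :: "('a::field \<Rightarrow> int) \<Rightarrow> bool" where
  "dyadic_local_field ord \<longleftrightarrow>
     (\<forall>x y. x \<noteq> 0 \<longrightarrow> y \<noteq> 0 \<longrightarrow> ord (x * y) = ord x + ord y) \<and>
     (\<forall>x y. x \<noteq> 0 \<longrightarrow> y \<noteq> 0 \<longrightarrow> x + y \<noteq> 0 \<longrightarrow> ord (x + y) \<ge> min (ord x) (ord y)) \<and>
     (\<exists>\<pi>. \<pi> \<noteq> 0 \<and> ord \<pi> = 1) \<and>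
     \<comment> \<open>complete w.r.t. the valuation\<close>
     (\<forall>X :: nat \<Rightarrow> 'a. (\<forall>k::int. \<exists>N. \<forall>p\<ge>N. \<forall>q\<ge>N. X p = X q \<or> ord (X p - X q) \<ge> k)
        \<longrightarrow> (\<exists>L. \<forall>k::int. \<exists>N. \<forall>p\<ge>N. X p = L \<or> ord (X p - L) \<ge> k)) \<and>
     \<comment> \<open>finite residue field\<close>
     (\<exists>S. finite S \<and> S \<subseteq> intO ord \<and> (\<forall>x\<in>intO ord. \<exists>s\<in>S. x - s \<in> maxP ord)) \<and>
     \<comment> \<open>dyadic: residue characteristic 2 (and char F = 0)\<close>
     (2::'a) \<noteq> 0 \<and> ord 2 > 0"

definition eram :: "('a::field \<Rightarrow> int) \<Rightarrow> int" where
  "eram ord = ord 2"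

definition qdefect :: "('a::field \<Rightarrow> int) \<Rightarrow> 'a \<Rightarrow> 'a set" where
  "qdefect ord c = (\<Inter>x. {(c - x^2) * y | y. y \<in> intO ord})"

definition ideal_ord :: "('a::field \<Rightarrow> int) \<Rightarrow> 'a set \<Rightarrow> ereal" where
  "ideal_ord ord I = (INF y\<in>I. vord ord y)"

definition dd :: "('a::field \<Rightarrow> int) \<Rightarrow> 'a \<Rightarrow> ereal" where
  "dd ord c = ideal_ord ord (qdefect ord c) - ereal (of_int (ord c))"

text \<open>Vectors: functions nat \<Rightarrow> F supported on {..<k}; bilinear form given by a
symmetric Gram matrix G; Q(x) = B(x,x).\<close>

definition vec_space :: "nat \<Rightarrow> (nat \<Rightarrow> 'a::field) set" where
  "vec_space k = {v. \<forall>i\<ge>k. v i = 0}"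

definition bil :: "(nat \<Rightarrow> nat \<Rightarrow> 'a::field) \<Rightarrow> nat \<Rightarrow> (nat \<Rightarrow> 'a) \<Rightarrow> (nat \<Rightarrow> 'a) \<Rightarrow> 'a" where
  "bil G k x y = (\<Sum>i<k. \<Sum>j<k. x i * G i j * y j)"

definition qf :: "(nat \<Rightarrow> nat \<Rightarrow> 'a::field) \<Rightarrow> nat \<Rightarrow> (nat \<Rightarrow> 'a) \<Rightarrow> 'a" where
  "qf G k x = bil G k x x"

definition quad_space :: "(nat \<Rightarrow> nat \<Rightarrow> 'a::field) \<Rightarrow> nat \<Rightarrow> bool" where
  "quad_space G k \<longleftrightarrow> (\<forall>i j. G i j = G j i)"

definition O_span :: "('a::field \<Rightarrow> int) \<Rightarrow> (nat \<Rightarrow> 'a) list \<Rightarrow> (nat \<Rightarrow> 'a) set" where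
  "O_span ord gs = {(\<lambda>i. \<Sum>j<length gs. c j * (gs ! j) i) | c. \<forall>j. c j \<in> intO ord}"

definition is_lattice :: "('a::field \<Rightarrow> int) \<Rightarrow> nat \<Rightarrow> (nat \<Rightarrow> 'a) set \<Rightarrow> bool" where
  "is_lattice ord k M \<longleftrightarrow> (\<exists>gs. set gs \<subseteq> vec_space k \<and> M = O_span ord gs)"

definition integral :: "('a::field \<Rightarrow> int) \<Rightarrow> (nat \<Rightarrow> nat \<Rightarrow> 'a) \<Rightarrow> nat \<Rightarrow> (nat \<Rightarrow> 'a) set \<Rightarrow> bool" where
  "integral ord G k M \<longleftrightarrow> qf G k ` M \<subseteq> intO ord"

definition norm_ideal :: "('a::field \<Rightarrow> int) \<Rightarrow> (nat \<Rightarrow> nat \<Rightarrow> 'a) \<Rightarrow> nat \<Rightarrow> (nat \<Rightarrow> 'a) set \<Rightarrow> 'a set" where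
  "norm_ideal ord G k M = {\<Sum>j<l. c j * qf G k (y j) | (l::nat) (c::nat \<Rightarrow> 'a) y. (\<forall>j. c j \<in> intO ord) \<and> (\<forall>j<l. y j \<in> M)}"

definition proj :: "(nat \<Rightarrow> nat \<Rightarrow> 'a::field) \<Rightarrow> nat \<Rightarrow> (nat \<Rightarrow> 'a) \<Rightarrow> (nat \<Rightarrow> 'a) \<Rightarrow> (nat \<Rightarrow> 'a)" where
  "proj G k x y = (\<lambda>i. y i - (bil G k x y / qf G k x) * x i)"

primrec is_bong :: "('a::field \<Rightarrow> int) \<Rightarrow> (nat \<Rightarrow> nat \<Rightarrow> 'a) \<Rightarrow> nat \<Rightarrow> (nat \<Rightarrow> 'a) set \<Rightarrow> (nat \<Rightarrow> 'a) list \<Rightarrow> bool" where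
  "is_bong ord G k M [] \<longleftrightarrow> M = {(\<lambda>i. 0)}"
| "is_bong ord G k M (x # xs) \<longleftrightarrow>
     x \<in> M \<and> qf G k x \<noteq> 0 \<and>
     norm_ideal ord G k M = {qf G k x * c | c. c \<in> intO ord} \<and>
     is_bong ord G k (proj G k x ` M) xs"

definition good_bong :: "('a::field \<Rightarrow> int) \<Rightarrow> (nat \<Rightarrow> nat \<Rightarrow> 'a) \<Rightarrow> nat \<Rightarrow> (nat \<Rightarrow> 'a) set \<Rightarrow> (nat \<Rightarrow> 'a) list \<Rightarrow> bool" where
  "good_bong ord G k M xs \<longleftrightarrow> is_bong ord G k M xs \<and>
     (\<forall>i. i + 2 < length xs \<longrightarrow> ord (qf G k (xs ! i)) \<le> ord (qf G k (xs ! (i + 2))))"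

text \<open>M \<cong> \<prec>a_1,...,a_m\<succ> relative to a good BONG (a is 1-indexed).\<close>
definition good_bong_repr :: "('a::field \<Rightarrow> int) \<Rightarrow> (nat \<Rightarrow> nat \<Rightarrow> 'a) \<Rightarrow> nat \<Rightarrow> (nat \<Rightarrow> 'a) set \<Rightarrow> (nat \<Rightarrow> 'a) \<Rightarrow> nat \<Rightarrow> bool" where
  "good_bong_repr ord G k M a m \<longleftrightarrow>
     (\<exists>xs. length xs = m \<and> good_bong ord G k M xs \<and> (\<forall>i\<in>{1..m}. qf G k (xs ! (i - 1)) = a i))"

definition pr :: "(nat \<Rightarrow> 'a::field) \<Rightarrow> nat \<Rightarrow> nat \<Rightarrow> 'a" where
  "pr a i j = (\<Prod>l\<in>{i..j}. a l)"

definition Tterm :: "('a::field \<Rightarrow> int) \<Rightarrow> (nat \<Rightarrow> 'a) \<Rightarrow> nat \<Rightarrow> nat \<Rightarrow> ereal" where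
  "Tterm ord a i j =
     (if j \<le> i then ereal (of_int (ord (a (i+1)) - ord (a j))) + dd ord (- a j * a (j+1))
      else ereal (of_int (ord (a (j+1)) - ord (a i))) + dd ord (- a j * a (j+1)))"

definition alpha :: "('a::field \<Rightarrow> int) \<Rightarrow> (nat \<Rightarrow> 'a) \<Rightarrow> nat \<Rightarrow> nat \<Rightarrow> ereal" where
  "alpha ord a m i = Min (insert (ereal ((of_int (ord (a (i+1))) - of_int (ord (a i))) / 2 + of_int (eram ord)))
                           (Tterm ord a i ` {1..m-1}))"

text \<open>d[c a_{i,j}], with alpha_0, alpha_m omitted.\<close>
definition dA :: "('a::field \<Rightarrow> int) \<Rightarrow> (nat \<Rightarrow> 'a) \<Rightarrow> nat \<Rightarrow> 'a \<Rightarrow> nat \<Rightarrow> nat \<Rightarrow> ereal" where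
  "dA ord a m c i j = Min ({dd ord (c * pr a i j)}
      \<union> (if i - 1 \<notin> {0, m} then {alpha ord a m (i - 1)} else {})
      \<union> (if j \<notin> {0, m} then {alpha ord a m j} else {}))"

text \<open>d[c a_{1,i} b_{1,j}], with alpha_i omitted if i in {0,m}, beta_j omitted if j in {0,n}.\<close>
definition dAB :: "('a::field \<Rightarrow> int) \<Rightarrow> (nat \<Rightarrow> 'a) \<Rightarrow> nat \<Rightarrow> (nat \<Rightarrow> 'a) \<Rightarrow> nat \<Rightarrow> 'a \<Rightarrow> nat \<Rightarrow> nat \<Rightarrow> ereal" where
  "dAB ord a m b n c i j = Min ({dd ord (c * pr a 1 i * pr b 1 j)}
      \<union> (if i \<notin> {0, m} then {alpha ord a m i} else {})
      \<union> (if j \<notin> {0, n} then {alpha ord b n j} else {}))"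

end

theory Submission
  imports Defs
begin

text \<open>
  The BONG conditions R_i \<le> R_{i+2} and R_{i+1} \<ge> R_i - 2e together with R_{n-1} = -2e and
  R_n = 0 force R_i = 0 for odd i \<le> n and R_i = -2e for even i < n. Then \<alpha>_n = 1 gives
  R_{n+1} \<ge> 2 - 2e and \<alpha>_{n-1} \<ge> 2e, so the value 1 - R_{n+1} of d[-a_n a_{n+1}] is attained by
  \<alpha>_{n+1} or by d(-a_n a_{n+1}). The right side is min(d(a_{1,n} b_{1,n}), 1), and d(c) \<ge> 1
  whenever ord c is even, so it suffices to bound the left side by 1 - S_n or by 0.

  If \<alpha>_{n+1} attains the minimum, the bound 1 - S_n is immediate. Otherwise write
  -a_{1,n+1} b_{1,n-1} = (-a_n a_{n+1}) w with w = a_{1,n-1} b_{1,n-1}. If d(w) > 1 - R_{n+1},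
  the domination principle gives d(-a_{1,n+1} b_{1,n-1}) = 1 - R_{n+1}, hence again 1 - S_n.
  If not, some pair -b_j b_{j+1}, j odd, has defect at most 1 - R_{n+1}, and the left side is at
  most R_{n+1} - S_j + d(-b_j b_{j+1}) through \<beta>_{n-1}. The remaining cases are parity arguments:
  d(c) = 0 for odd ord c, and a change of parity among S_{j+1}, ..., S_n produces an index i with
  S_{i+1} - S_i odd and S_i \<ge> R_{n+1}.
\<close>

section \<open>Bilinear forms and BONGs\<close>

lemma bil_add_right: "bil G k x (\<lambda>i. u i + v i) = bil G k x u + bil G k x v"
  unfolding bil_def by (simp add: algebra_simps sum.distrib)

lemma bil_add_left: "bil G k (\<lambda>i. u i + v i) x = bil G k u x + bil G k v x"
  unfolding bil_def by (simp add: algebra_simps sum.distrib)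

lemma bil_smult_right: "bil G k x (\<lambda>i. c * u i) = c * bil G k x u"
  unfolding bil_def by (simp add: algebra_simps sum_distrib_left)

lemma bil_diff_smult_left: "bil G k (\<lambda>i. u i - c * v i) x = bil G k u x - c * bil G k v x"
  unfolding bil_def by (simp add: algebra_simps sum_distrib_left sum_subtractf)

lemma bil_diff_smult_right: "bil G k x (\<lambda>i. u i - c * v i) = bil G k x u - c * bil G k x v"
  unfolding bil_def by (simp add: algebra_simps sum_distrib_left sum_subtractf)

lemma bil_commute:
  assumes "quad_space G k"
  shows "bil G k u v = bil G k v u"
proof -
  have "bil G k u v = (\<Sum>j<k. \<Sum>i<k. u i * G i j * v j)" unfolding bil_def by (rule sum.swap)
  also have "\<dots> = bil G k v u"
    using assms unfolding bil_def quad_space_def by (intro sum.cong refl) (simp add: algebra_simps)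
  finally show ?thesis .
qed

lemma qf_proj:
  assumes "quad_space G k" "qf G k x \<noteq> 0"
  shows "qf G k (proj G k x y) = qf G k y - (bil G k x y / qf G k x)^2 * qf G k x"
proof -
  define t where "t = bil G k x y / qf G k x"
  have p: "proj G k x y = (\<lambda>i. y i - t * x i)" unfolding proj_def t_def by simp
  have "qf G k (proj G k x y) = bil G k y y - t * bil G k y x - t * (bil G k x y - t * bil G k x x)"
    unfolding qf_def p bil_diff_smult_left bil_diff_smult_right by simp
  also have "\<dots> = qf G k y - 2 * t * bil G k x y + t^2 * qf G k x"
    using bil_commute[OF assms(1), of y x] unfolding qf_def by (simp add: algebra_simps power2_eq_square)
  also have "bil G k x y = t * qf G k x" unfolding t_def using assms(2) by simp
  finally show ?thesis unfolding t_def[symmetric] by (simp add: algebra_simps power2_eq_square)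
qed

lemma qf_add:
  assumes "quad_space G k"
  shows "qf G k (\<lambda>i. y i + x i) = qf G k y + 2 * bil G k x y + qf G k x"
  unfolding qf_def bil_add_left bil_add_right using bil_commute[OF assms, of y x] by (simp add: algebra_simps)

definition O_module :: "('a::field \<Rightarrow> int) \<Rightarrow> (nat \<Rightarrow> 'a) set \<Rightarrow> bool" where
  "O_module ord L \<longleftrightarrow>
     (\<forall>u\<in>L. \<forall>v\<in>L. (\<lambda>i. u i + v i) \<in> L) \<and> (\<forall>u\<in>L. \<forall>c\<in>intO ord. (\<lambda>i. c * u i) \<in> L)"

lemma O_module_proj_image:
  assumes "O_module ord L"
  shows "O_module ord (proj G k x ` L)"
proof -
  have add: "proj G k x (\<lambda>i. u i + v i) = (\<lambda>i. proj G k x u i + proj G k x v i)" for u v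
    unfolding proj_def bil_add_right by (simp add: algebra_simps add_divide_distrib)
  have smult: "proj G k x (\<lambda>i. c * u i) = (\<lambda>i. c * proj G k x u i)" for c u
    unfolding proj_def bil_smult_right by (simp add: algebra_simps)
  show ?thesis using assms unfolding O_module_def by (auto simp: add[symmetric] smult[symmetric] image_iff)
qed

text \<open>The lattice whose first BONG vector is xs ! i (indices from 0).\<close>
fun proj_iter :: "(nat \<Rightarrow> nat \<Rightarrow> 'a::field) \<Rightarrow> nat \<Rightarrow> (nat \<Rightarrow> 'a) set \<Rightarrow> (nat \<Rightarrow> 'a) list \<Rightarrow> nat \<Rightarrow> (nat \<Rightarrow> 'a) set" where
  "proj_iter G k M xs 0 = M"
| "proj_iter G k M [] (Suc i) = M"
| "proj_iter G k M (x # xs) (Suc i) = proj_iter G k (proj G k x ` M) xs i"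

lemma O_module_proj_iter: "O_module ord M \<Longrightarrow> O_module ord (proj_iter G k M xs i)"
  by (induction G k M xs i rule: proj_iter.induct) (auto simp: O_module_proj_image)

lemma is_bong_nth:
  assumes "is_bong ord G k M xs" "i < length xs"
  shows "xs ! i \<in> proj_iter G k M xs i \<and> qf G k (xs ! i) \<noteq> 0 \<and>
    norm_ideal ord G k (proj_iter G k M xs i) = {qf G k (xs ! i) * c | c. c \<in> intO ord} \<and>
    (Suc i < length xs \<longrightarrow> xs ! Suc i \<in> proj G k (xs ! i) ` proj_iter G k M xs i)"
  using assms
proof (induction xs arbitrary: M i)
  case (Cons x xs)
  show ?case
  proof (cases i)
    case 0
    then show ?thesis using Cons.IH[of "proj G k x ` M" 0] Cons.prems by auto
  next
    case (Suc j)
    then show ?thesis using Cons.IH[of "proj G k x ` M" j] Cons.prems by simp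
  qed
qed simp

section \<open>The invariants \<alpha> and d[\<cdot>]\<close>

lemma pr_Suc: "i \<le> Suc j \<Longrightarrow> pr a i (Suc j) = pr a i j * a (Suc j)"
  unfolding pr_def by (simp add: prod.nat_ivl_Suc')

lemma pr_nonzero: "(\<And>l. i \<le> l \<Longrightarrow> l \<le> j \<Longrightarrow> a l \<noteq> 0) \<Longrightarrow> pr a i j \<noteq> 0"
  unfolding pr_def by (auto simp: prod_zero_iff)

lemma alpha_le_first:
  "alpha ord a m i \<le> ereal ((of_int (ord (a (i + 1))) - of_int (ord (a i))) / 2 + of_int (eram ord))"
  unfolding alpha_def by (rule Min_le) auto

lemma alpha_le_Tterm: "1 \<le> j \<Longrightarrow> j \<le> m - 1 \<Longrightarrow> alpha ord a m i \<le> Tterm ord a i j"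
  unfolding alpha_def by (rule Min_le) auto

lemma le_alpha:
  "z \<le> ereal ((of_int (ord (a (i + 1))) - of_int (ord (a i))) / 2 + of_int (eram ord)) \<Longrightarrow>
   (\<And>j. 1 \<le> j \<Longrightarrow> j \<le> m - 1 \<Longrightarrow> z \<le> Tterm ord a i j) \<Longrightarrow> z \<le> alpha ord a m i"
  unfolding alpha_def by (subst Min_ge_iff) auto

lemma alpha_pred_last_le:
  assumes "1 \<le> j" "j \<le> n - 1"
  shows "alpha ord b n (n - 1) \<le> ereal (of_int (ord (b n) - ord (b j))) + dd ord (- b j * b (j + 1))"
proof -
  have "n - 1 + 1 = n" using assms by simp
  then have "Tterm ord b (n - 1) j = ereal (of_int (ord (b n) - ord (b j))) + dd ord (- b j * b (j + 1))"
    unfolding Tterm_def using assms by simp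
  moreover have "alpha ord b n (n - 1) \<le> Tterm ord b (n - 1) j" using assms by (rule alpha_le_Tterm)
  ultimately show ?thesis by simp
qed

lemma dA_cases:
  "dA ord a m c i j = dd ord (c * pr a i j) \<or>
   (i - 1 \<notin> {0, m} \<and> dA ord a m c i j = alpha ord a m (i - 1)) \<or>
   (j \<notin> {0, m} \<and> dA ord a m c i j = alpha ord a m j)"
proof -
  let ?S = "{dd ord (c * pr a i j)} \<union> (if i - 1 \<notin> {0, m} then {alpha ord a m (i - 1)} else {})
      \<union> (if j \<notin> {0, m} then {alpha ord a m j} else {})"
  have "Min ?S \<in> ?S" by (rule Min_in) auto
  then show ?thesis unfolding dA_def by (auto split: if_splits)
qed

lemma dAB_le_dd: "dAB ord a m b n c i j \<le> dd ord (c * pr a 1 i * pr b 1 j)"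
  unfolding dAB_def by (rule Min_le) auto

lemma dAB_le_alpha_left: "i \<notin> {0, m} \<Longrightarrow> dAB ord a m b n c i j \<le> alpha ord a m i"
  unfolding dAB_def by (rule Min_le) auto

lemma dAB_le_alpha_right: "j \<notin> {0, n} \<Longrightarrow> dAB ord a m b n c i j \<le> alpha ord b n j"
  unfolding dAB_def by (rule Min_le) auto

lemma dAB_last_right:
  assumes "i \<notin> {0, m}"
  shows "dAB ord a m b n c i n = min (dd ord (c * pr a 1 i * pr b 1 n)) (alpha ord a m i)"
  unfolding dAB_def using assms by (simp add: min.commute)

section \<open>Dyadic valuations and the quadratic defect\<close>

text \<open>Orders of ideals, and hence the values d(c), lie in \<int> \<union> {\<infinity>}, so inequalities between them
  can be tested against integer bounds.\<close>
definition int_or_inf :: "ereal \<Rightarrow> bool" where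
  "int_or_inf x \<longleftrightarrow> x = \<infinity> \<or> (\<exists>z::int. x = ereal (of_int z))"

lemma int_set_has_least:
  fixes Z :: "int set"
  assumes "Z \<noteq> {}" "\<forall>z\<in>Z. b \<le> z"
  shows "\<exists>z0\<in>Z. \<forall>z\<in>Z. z0 \<le> z"
proof -
  obtain z1 where z1: "z1 \<in> Z" using assms by auto
  define N where "N = {n::nat. b + int n \<in> Z}"
  have "nat (z1 - b) \<in> N" using z1 assms unfolding N_def by auto
  then have n0N: "(LEAST n. n \<in> N) \<in> N" by (rule LeastI)
  show ?thesis
  proof (intro bexI[of _ "b + int (LEAST n. n \<in> N)"] ballI)
    show "b + int (LEAST n. n \<in> N) \<in> Z" using n0N unfolding N_def by auto
    fix z assume z: "z \<in> Z"
    then have "nat (z - b) \<in> N" using assms unfolding N_def by auto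
    then have "(LEAST n. n \<in> N) \<le> nat (z - b)" by (rule Least_le)
    then show "b + int (LEAST n. n \<in> N) \<le> z" using assms z by auto
  qed
qed

lemma int_or_inf_le_by_int_bounds:
  assumes "int_or_inf A" "\<And>d::int. ereal (of_int d) \<le> A \<Longrightarrow> ereal (of_int d) \<le> B"
  shows "A \<le> B"
proof -
  consider "A = \<infinity>" | z where "A = ereal (of_int z)" using assms(1) unfolding int_or_inf_def by blast
  then show ?thesis
  proof cases
    case 1
    then have all: "\<And>d::int. ereal (of_int d) \<le> B" using assms(2) by simp
    show ?thesis
    proof (cases B)
      case (real r)
      have "ereal (of_int (\<lceil>r\<rceil> + 1)) \<le> B" by (rule all)
      then show ?thesis using real by simp linarith
    next
      case MInf then show ?thesis using all[of 0] by simp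
    qed (simp add: 1)
  next
    case 2 then show ?thesis using assms(2)[of z] by simp
  qed
qed

lemma int_or_inf_min: "int_or_inf A \<Longrightarrow> int_or_inf B \<Longrightarrow> int_or_inf (min A B)"
  by (auto simp: min_def)

lemma int_or_inf_le_if_not_ge: "int_or_inf A \<Longrightarrow> \<not> ereal (of_int k) \<le> A \<Longrightarrow> A \<le> ereal (of_int (k - 1))"
  unfolding int_or_inf_def by auto

lemma ereal_of_int_le_add_iff: "ereal (of_int y) \<le> ereal (of_int x) + d \<longleftrightarrow> ereal (of_int (y - x)) \<le> d"
  by (cases d) auto

locale dyadic_valuation =
  fixes ord :: "'a::field \<Rightarrow> int"
  assumes dyadic: "dyadic_local_field ord"
begin

lemma ord_mult: "x \<noteq> 0 \<Longrightarrow> y \<noteq> 0 \<Longrightarrow> ord (x * y) = ord x + ord y"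
  using dyadic unfolding dyadic_local_field_def by blast

lemma ord_add_ge: "x \<noteq> 0 \<Longrightarrow> y \<noteq> 0 \<Longrightarrow> x + y \<noteq> 0 \<Longrightarrow> min (ord x) (ord y) \<le> ord (x + y)"
  using dyadic unfolding dyadic_local_field_def by blast

lemma exists_uniformizer: "\<exists>\<pi>. \<pi> \<noteq> 0 \<and> ord \<pi> = 1"
  using dyadic unfolding dyadic_local_field_def by blast

lemma two_neq_zero: "(2::'a) \<noteq> 0" and eram_pos: "1 \<le> eram ord"
  using dyadic unfolding dyadic_local_field_def eram_def by auto

lemma ord_one [simp]: "ord 1 = 0"
  using ord_mult[of 1 1] by simp

lemma ord_minus_one [simp]: "ord (-1) = 0"
  using ord_mult[of "-1" "-1"] by simp

lemma ord_uminus [simp]: "ord (- x) = ord x"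
  using ord_mult[of "-1" x] by (cases "x = 0") simp_all

lemma ord_inverse: "x \<noteq> 0 \<Longrightarrow> ord (inverse x) = - ord x"
  using ord_mult[of x "inverse x"] by simp

lemma ord_divide: "x \<noteq> 0 \<Longrightarrow> y \<noteq> 0 \<Longrightarrow> ord (x / y) = ord x - ord y"
  by (simp add: divide_inverse ord_mult ord_inverse)

lemma ord_power: "x \<noteq> 0 \<Longrightarrow> ord (x ^ n) = int n * ord x"
  by (induction n) (auto simp: ord_mult algebra_simps)

abbreviation val :: "'a \<Rightarrow> ereal" where
  "val \<equiv> vord ord"

lemma val_zero [simp]: "val 0 = \<infinity>"
  by (simp add: vord_def)

lemma val_nonzero: "x \<noteq> 0 \<Longrightarrow> val x = ereal (of_int (ord x))"
  by (simp add: vord_def)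

lemma val_eq_infinity_iff: "val x = \<infinity> \<longleftrightarrow> x = 0"
  by (simp add: vord_def)

lemma val_mult: "val (x * y) = val x + val y"
  by (cases "x = 0"; cases "y = 0") (auto simp: val_nonzero ord_mult)

lemma val_uminus [simp]: "val (- x) = val x"
  by (cases "x = 0") (auto simp: val_nonzero)

lemma val_add_ge_min: "min (val x) (val y) \<le> val (x + y)"
proof -
  consider "x = 0" | "y = 0" | "x + y = 0" | "x \<noteq> 0" "y \<noteq> 0" "x + y \<noteq> 0" by blast
  then show ?thesis
  proof cases
    case 4 then show ?thesis using ord_add_ge[of x y] by (auto simp: val_nonzero min_def)
  qed auto
qed

lemma val_add_ge: "c \<le> val x \<Longrightarrow> c \<le> val y \<Longrightarrow> c \<le> val (x + y)"
  using val_add_ge_min[of x y] by (simp add: min_def split: if_splits)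

lemma val_diff_ge: "c \<le> val x \<Longrightarrow> c \<le> val y \<Longrightarrow> c \<le> val (x - y)"
  using val_add_ge[of c x "- y"] by simp

lemma val_add_eq_of_less:
  assumes "val x < val y"
  shows "val (x + y) = val x"
proof -
  have "val x \<le> val (x + y)"
    using val_add_ge_min[of x y] assms by (simp add: min_def split: if_splits)
  moreover have "min (val (x + y)) (val y) \<le> val x"
    using val_add_ge_min[of "x + y" "- y"] by simp
  ultimately show ?thesis using assms by (auto simp: min_def split: if_splits)
qed

lemma val_ge_mult:
  "ereal (of_int K1) \<le> val x \<Longrightarrow> ereal (of_int K2) \<le> val y \<Longrightarrow> ereal (of_int (K1 + K2)) \<le> val (x * y)"
  by (cases "x = 0"; cases "y = 0") (auto simp: val_nonzero ord_mult)

lemma val_ge_mono: "ereal (of_int K1) \<le> val x \<Longrightarrow> K2 \<le> K1 \<Longrightarrow> ereal (of_int K2) \<le> val x"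
  by (cases "x = 0") (auto simp: val_nonzero)

lemma mem_intO_iff: "y \<in> intO ord \<longleftrightarrow> 0 \<le> val y"
  by (cases "y = 0") (auto simp: intO_def val_nonzero)

lemma mem_maxP_iff: "y \<in> maxP ord \<longleftrightarrow> 1 \<le> val y"
  by (cases "y = 0") (auto simp: maxP_def val_nonzero)

lemma one_le_val_two: "1 \<le> val (2::'a)"
  using eram_pos two_neq_zero by (simp add: val_nonzero eram_def)

definition uniformizer :: 'a where
  "uniformizer = (SOME \<pi>. \<pi> \<noteq> 0 \<and> ord \<pi> = 1)"

lemma uniformizer: "uniformizer \<noteq> 0" "ord uniformizer = 1"
  using someI_ex[OF exists_uniformizer] unfolding uniformizer_def by auto

lemma ord_uniformizer_powi: "ord (uniformizer powi z) = z"
  using uniformizer by (simp add: power_int_def ord_power ord_inverse)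

lemma mem_qdefect_iff: "y \<in> qdefect ord c \<longleftrightarrow> (\<forall>x. val (c - x^2) \<le> val y)"
proof
  assume y: "y \<in> qdefect ord c"
  show "\<forall>x. val (c - x^2) \<le> val y"
  proof
    fix x
    from y obtain z where "y = (c - x^2) * z" "z \<in> intO ord" unfolding qdefect_def by blast
    then show "val (c - x^2) \<le> val y" by (simp add: val_mult mem_intO_iff add_increasing2)
  qed
next
  assume h: "\<forall>x. val (c - x^2) \<le> val y"
  have "\<exists>z. y = (c - x^2) * z \<and> z \<in> intO ord" for x
  proof (cases "c - x^2 = 0 \<or> y = 0")
    case True
    then have "y = 0" using h[rule_format, of x] by (auto simp: val_eq_infinity_iff[symmetric])
    then show ?thesis by (auto simp: intO_def)
  next
    case False
    then have "ord (c - x^2) \<le> ord y" using h[rule_format, of x] by (simp add: val_nonzero)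
    then have "y / (c - x^2) \<in> intO ord" using False by (simp add: intO_def ord_divide)
    then show ?thesis using False by (intro exI[of _ "y / (c - x^2)"]) simp
  qed
  then show "y \<in> qdefect ord c" unfolding qdefect_def by blast
qed

lemma ideal_ord_ge_iff: "K \<le> ideal_ord ord I \<longleftrightarrow> (\<forall>y\<in>I. K \<le> val y)"
  by (simp add: ideal_ord_def le_INF_iff)

lemma ideal_ord_qdefect_ge_iff:
  "ereal (of_int K) \<le> ideal_ord ord (qdefect ord c) \<longleftrightarrow> (\<exists>x. ereal (of_int K) \<le> val (c - x^2))"
proof
  assume "\<exists>x. ereal (of_int K) \<le> val (c - x^2)"
  then show "ereal (of_int K) \<le> ideal_ord ord (qdefect ord c)"
    unfolding ideal_ord_ge_iff using mem_qdefect_iff by (meson order_trans)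
next
  assume K: "ereal (of_int K) \<le> ideal_ord ord (qdefect ord c)"
  show "\<exists>x. ereal (of_int K) \<le> val (c - x^2)"
  proof (rule ccontr)
    assume "\<not> ?thesis"
    then have lt: "val (c - x^2) < ereal (of_int K)" for x by (simp add: not_le)
    \<comment> \<open>then \<pi>^(K-1) lies in the quadratic defect, although its order is below K\<close>
    have "uniformizer powi (K - 1) \<in> qdefect ord c"
      unfolding mem_qdefect_iff
    proof
      fix x
      have nz: "c - x^2 \<noteq> 0" using lt[of x] by (auto simp: val_eq_infinity_iff[symmetric])
      then have "ord (c - x^2) < K" using lt[of x] by (simp add: val_nonzero)
      then show "val (c - x^2) \<le> val (uniformizer powi (K - 1))"
        using nz by (simp add: val_nonzero uniformizer ord_uniformizer_powi)
    qed
    then have "ereal (of_int K) \<le> val (uniformizer powi (K - 1))" using K unfolding ideal_ord_ge_iff by blast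
    then show False by (simp add: val_nonzero uniformizer ord_uniformizer_powi)
  qed
qed

lemma dd_ge_iff:
  assumes "c \<noteq> 0"
  shows "ereal (of_int d) \<le> dd ord c \<longleftrightarrow> (\<exists>x. ereal (of_int (ord c + d)) \<le> val (c - x^2))"
proof -
  have "ereal (of_int d) \<le> dd ord c \<longleftrightarrow> ereal (of_int (ord c + d)) \<le> ideal_ord ord (qdefect ord c)"
    unfolding dd_def by (cases "ideal_ord ord (qdefect ord c)") (auto simp: algebra_simps)
  then show ?thesis using ideal_ord_qdefect_ge_iff[of "ord c + d" c] by simp
qed

lemma int_or_inf_ideal_ord_qdefect:
  assumes "c \<noteq> 0"
  shows "int_or_inf (ideal_ord ord (qdefect ord c))"
proof -
  let ?Q = "qdefect ord c"
  define Z where "Z = {ord y |y. y \<in> ?Q \<and> y \<noteq> 0}"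
  show ?thesis
  proof (cases "Z = {}")
    case True
    then have "\<infinity> \<le> ideal_ord ord ?Q" unfolding ideal_ord_ge_iff Z_def by auto
    then show ?thesis unfolding int_or_inf_def by simp
  next
    case False
    have "\<forall>y\<in>?Q. ereal (of_int (ord c)) \<le> val y"
      using mem_qdefect_iff[of _ c] assms by (metis diff_zero power_zero_numeral val_nonzero)
    then have "\<forall>z\<in>Z. ord c \<le> z" unfolding Z_def by (auto simp: val_nonzero)
    then obtain y0 where y0: "y0 \<in> ?Q" "y0 \<noteq> 0" "\<forall>z\<in>Z. ord y0 \<le> z"
      using int_set_has_least[OF False] unfolding Z_def by blast
    have "ideal_ord ord ?Q \<le> val y0" unfolding ideal_ord_def using y0 by (simp add: INF_lower)
    moreover have "ereal (of_int (ord y0)) \<le> ideal_ord ord ?Q"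
      unfolding ideal_ord_ge_iff
    proof
      fix y assume "y \<in> ?Q"
      then show "ereal (of_int (ord y0)) \<le> val y"
        using y0(3) unfolding Z_def by (cases "y = 0") (auto simp: val_nonzero)
    qed
    ultimately show ?thesis unfolding int_or_inf_def using y0 by (auto simp: val_nonzero)
  qed
qed

lemma int_or_inf_dd: "c \<noteq> 0 \<Longrightarrow> int_or_inf (dd ord c)"
  using int_or_inf_ideal_ord_qdefect[of c] unfolding int_or_inf_def dd_def
  by (auto simp del: of_int_diff simp add: of_int_diff[symmetric])

lemma dd_nonneg:
  assumes "c \<noteq> 0"
  shows "0 \<le> dd ord c"
proof -
  have "ereal (of_int 0) \<le> dd ord c"
    using dd_ge_iff[of c 0] assms by (auto intro: exI[of _ 0] simp: val_nonzero)
  then show ?thesis by (simp add: zero_ereal_def)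
qed

lemma dd_one: "dd ord 1 = \<infinity>"
proof -
  have "\<exists>x. ereal (of_int (ord 1 + d)) \<le> val (1 - x^2)" for d :: int
    by (rule exI[of _ 1]) simp
  then have "ereal (of_int d) \<le> dd ord 1" for d :: int
    using dd_ge_iff[of 1 d] by simp
  then have "\<infinity> \<le> dd ord 1"
    by (rule int_or_inf_le_by_int_bounds[rotated]) (simp add: int_or_inf_def)
  then show ?thesis by simp
qed

lemma dd_eq_zero_if_odd_ord:
  assumes c: "c \<noteq> 0" and odd: "odd (ord c)"
  shows "dd ord c = 0"
proof -
  have not_ge: "\<not> ereal (of_int 1) \<le> dd ord c"
  proof
    assume "ereal (of_int 1) \<le> dd ord c"
    then obtain x where x: "ereal (of_int (ord c + 1)) \<le> val (c - x^2)" using dd_ge_iff[OF c] by blast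
    have "val c < val (c - x^2)" using c x by (cases "c - x^2 = 0") (auto simp: val_nonzero)
    then have "val c < val (- (c - x^2))" by (simp only: val_uminus)
    then have "val (c + - (c - x^2)) = val c" by (rule val_add_eq_of_less)
    then have "val (x^2) = val c" by simp
    then have "x \<noteq> 0" using c by (auto simp: val_nonzero)
    then have "2 * ord x = ord c" using \<open>val (x^2) = val c\<close> c by (simp add: val_nonzero ord_power)
    then show False using odd by presburger
  qed
  have "dd ord c \<le> ereal (of_int (1 - 1))"
    by (rule int_or_inf_le_if_not_ge[OF int_or_inf_dd[OF c] not_ge])
  then have "dd ord c \<le> 0" by (simp add: zero_ereal_def)
  then show ?thesis using dd_nonneg[OF c] by simp
qed

lemma val_square_ge_if_close:
  assumes c: "c \<noteq> 0" and d: "0 \<le> d" and x: "ereal (of_int (ord c + d)) \<le> val (c - x^2)"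
  shows "ereal (of_int (ord c)) \<le> val (x^2)"
proof -
  have "x^2 = c - (c - x^2)" by simp
  moreover have "ereal (of_int (ord c)) \<le> val c" using c by (simp add: val_nonzero)
  moreover have "ereal (of_int (ord c)) \<le> val (c - x^2)" using val_ge_mono[OF x, of "ord c"] d by simp
  ultimately show ?thesis using val_diff_ge by metis
qed

lemma dd_mult_ge_int:
  assumes c: "c \<noteq> 0" and c': "c' \<noteq> 0"
    and d: "ereal (of_int d) \<le> dd ord c" "ereal (of_int d) \<le> dd ord c'"
  shows "ereal (of_int d) \<le> dd ord (c * c')"
proof (cases "d \<le> 0")
  case True
  then show ?thesis using dd_nonneg[of "c * c'"] c c' by (simp add: order_trans[rotated] zero_ereal_def)
next
  case False
  obtain x where x: "ereal (of_int (ord c + d)) \<le> val (c - x^2)" using d(1) dd_ge_iff[OF c] by blast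
  obtain y where y: "ereal (of_int (ord c' + d)) \<le> val (c' - y^2)" using d(2) dd_ge_iff[OF c'] by blast
  have x2: "ereal (of_int (ord c)) \<le> val (x^2)" and y2: "ereal (of_int (ord c')) \<le> val (y^2)"
    using val_square_ge_if_close[OF c _ x] val_square_ge_if_close[OF c' _ y] False by simp_all
  define u where "u = c - x^2"
  define v where "v = c' - y^2"
  have u: "ereal (of_int (ord c + d)) \<le> val u" and v: "ereal (of_int (ord c' + d)) \<le> val v"
    using x y unfolding u_def v_def by simp_all
  let ?K = "ereal (of_int (ord (c * c') + d))"
  have oc: "ord (c * c') = ord c + ord c'" using c c' by (simp add: ord_mult)
  have split: "c * c' - (x * y)^2 = x^2 * v + y^2 * u + u * v"
    unfolding u_def v_def by (simp add: algebra_simps power2_eq_square)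
  have "?K \<le> val (x^2 * v)" using val_ge_mult[OF x2 v] oc by (simp add: algebra_simps)
  moreover have "?K \<le> val (y^2 * u)" using val_ge_mult[OF y2 u] oc by (simp add: algebra_simps)
  moreover have "?K \<le> val (u * v)"
    using val_ge_mono[OF val_ge_mult[OF u v], of "ord (c * c') + d"] oc False by (simp add: algebra_simps)
  ultimately have "?K \<le> val (c * c' - (x * y)^2)" unfolding split by (intro val_add_ge)
  then show ?thesis using dd_ge_iff[of "c * c'" d] c c' by (meson mult_eq_0_iff)
qed

lemma dd_mult_ge_min:
  assumes "c \<noteq> 0" "c' \<noteq> 0"
  shows "min (dd ord c) (dd ord c') \<le> dd ord (c * c')"
  by (rule int_or_inf_le_by_int_bounds) (use assms int_or_inf_dd int_or_inf_min dd_mult_ge_int in auto)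

lemma dd_mult_square_ge_int:
  assumes c: "c \<noteq> 0" and t: "t \<noteq> 0" and d: "ereal (of_int d) \<le> dd ord c"
  shows "ereal (of_int d) \<le> dd ord (c * t^2)"
proof -
  obtain x where x: "ereal (of_int (ord c + d)) \<le> val (c - x^2)" using d dd_ge_iff[OF c] by blast
  have e: "c * t^2 - (x * t)^2 = t^2 * (c - x^2)" by (simp add: algebra_simps power2_eq_square)
  have o: "ord (c * t^2) = 2 * ord t + ord c" using c t by (simp add: ord_mult ord_power)
  have t2: "ereal (of_int (2 * ord t)) \<le> val (t^2)" using t by (simp add: val_nonzero ord_power)
  have "ereal (of_int (ord (c * t^2) + d)) \<le> val (c * t^2 - (x * t)^2)"
    unfolding e using val_ge_mult[OF t2 x] o by (simp add: algebra_simps)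
  then show ?thesis using dd_ge_iff[of "c * t^2" d] c t by (meson mult_eq_0_iff power_not_zero)
qed

lemma dd_mult_square:
  assumes "c \<noteq> 0" "t \<noteq> 0"
  shows "dd ord (c * t^2) = dd ord c"
proof (rule antisym)
  show "dd ord c \<le> dd ord (c * t^2)"
    by (rule int_or_inf_le_by_int_bounds) (use assms int_or_inf_dd dd_mult_square_ge_int in auto)
  have "dd ord (c * t^2) \<le> dd ord ((c * t^2) * (inverse t)^2)"
    by (rule int_or_inf_le_by_int_bounds) (use assms int_or_inf_dd dd_mult_square_ge_int in auto)
  also have "(c * t^2) * (inverse t)^2 = c" using assms by (simp add: field_simps power2_eq_square)
  finally show "dd ord (c * t^2) \<le> dd ord c" .
qed

definition residue_class :: "'a \<Rightarrow> 'a set" where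
  "residue_class x = {y. 0 \<le> val y \<and> 1 \<le> val (y - x)}"

lemma residue_class_eq_iff:
  assumes "0 \<le> val x" "0 \<le> val y"
  shows "residue_class x = residue_class y \<longleftrightarrow> 1 \<le> val (x - y)"
proof
  assume "residue_class x = residue_class y"
  moreover have "x \<in> residue_class x" using assms unfolding residue_class_def by simp
  ultimately show "1 \<le> val (x - y)" unfolding residue_class_def by auto
next
  assume xy: "1 \<le> val (x - y)"
  have "1 \<le> val (z - y)" if "1 \<le> val (z - x)" for z
    using val_add_ge[OF that xy] by simp
  moreover have "1 \<le> val (z - x)" if "1 \<le> val (z - y)" for z
    using val_diff_ge[OF that xy] by simp
  ultimately show "residue_class x = residue_class y" unfolding residue_class_def by blast
qed

lemma one_le_val_mult: "1 \<le> val x \<Longrightarrow> 0 \<le> val y \<Longrightarrow> 1 \<le> val (x * y)"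
  using add_mono[of 1 "val x" 0 "val y"] by (simp add: val_mult)

text \<open>Since 2 lies in the maximal ideal, (x - y)^2 is congruent to x^2 - y^2.\<close>
lemma residue_class_square_eq_iff:
  assumes x: "0 \<le> val x" and y: "0 \<le> val y"
  shows "residue_class (x^2) = residue_class (y^2) \<longleftrightarrow> residue_class x = residue_class y"
proof -
  have sq: "0 \<le> val (x^2)" "0 \<le> val (y^2)" using x y by (simp_all add: val_mult power2_eq_square)
  have "1 \<le> val (x^2 - y^2) \<longleftrightarrow> 1 \<le> val (x - y)"
  proof
    assume d2: "1 \<le> val (x^2 - y^2)"
    have "0 \<le> val (y * (x - y))" using x y val_diff_ge[OF x y] by (simp add: val_mult)
    then have "1 \<le> val (2 * (y * (x - y)))" by (rule one_le_val_mult[OF one_le_val_two])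
    moreover have "(x - y)^2 = (x^2 - y^2) - 2 * (y * (x - y))"
      by (simp add: algebra_simps power2_eq_square)
    ultimately have "1 \<le> val ((x - y)^2)" using val_diff_ge[OF d2] by simp
    then show "1 \<le> val (x - y)"
      by (cases "x - y = 0") (auto simp: power2_eq_square val_mult val_nonzero)
  next
    assume "1 \<le> val (x - y)"
    then have "1 \<le> val ((x - y) * (x + y))" using one_le_val_mult val_add_ge[OF x y] by blast
    moreover have "(x - y) * (x + y) = x^2 - y^2" by (simp add: algebra_simps power2_eq_square)
    ultimately show "1 \<le> val (x^2 - y^2)" by simp
  qed
  then show ?thesis using residue_class_eq_iff[OF sq] residue_class_eq_iff[OF x y] by simp
qed

text \<open>Squaring is injective on the finite residue field, hence surjective.\<close>
lemma exists_square_congruent: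
  assumes u: "0 \<le> val u"
  shows "\<exists>x. 1 \<le> val (u - x^2)"
proof -
  obtain S where S: "finite S" "S \<subseteq> intO ord" "\<forall>x\<in>intO ord. \<exists>s\<in>S. x - s \<in> maxP ord"
    using dyadic unfolding dyadic_local_field_def by blast
  have SO: "0 \<le> val s" if "s \<in> S" for s using S(2) that mem_intO_iff by blast
  define CL where "CL = residue_class ` S"
  have in_CL: "residue_class x \<in> CL" if x: "0 \<le> val x" for x
  proof -
    obtain s where s: "s \<in> S" "x - s \<in> maxP ord" using S(3) x mem_intO_iff by blast
    then have "residue_class x = residue_class s"
      using residue_class_eq_iff[OF x SO[OF s(1)]] mem_maxP_iff by blast
    then show ?thesis unfolding CL_def using s by blast
  qed
  define sq where "sq C = residue_class ((SOME x. 0 \<le> val x \<and> C = residue_class x)^2)" for C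
  have sq_class: "sq (residue_class x) = residue_class (x^2)" if x: "0 \<le> val x" for x
  proof -
    have "\<exists>x'. 0 \<le> val x' \<and> residue_class x = residue_class x'" using x by blast
    then obtain x' where x': "0 \<le> val x'" "residue_class x = residue_class x'"
      "sq (residue_class x) = residue_class (x'^2)"
      unfolding sq_def by (metis (mono_tags, lifting) someI_ex)
    then show ?thesis using residue_class_square_eq_iff[OF x x'(1)] by simp
  qed
  have sq_CL: "sq ` CL \<subseteq> CL"
  proof
    fix D assume "D \<in> sq ` CL"
    then obtain s where "s \<in> S" "D = sq (residue_class s)" unfolding CL_def by blast
    then show "D \<in> CL" using sq_class SO in_CL by (simp add: val_mult power2_eq_square)
  qed
  have "inj_on sq CL"
  proof (rule inj_onI)
    fix C1 C2 assume C: "C1 \<in> CL" "C2 \<in> CL" "sq C1 = sq C2"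
    then obtain x y where xy: "x \<in> S" "y \<in> S" "C1 = residue_class x" "C2 = residue_class y"
      unfolding CL_def by blast
    then show "C1 = C2" using C(3) sq_class SO residue_class_square_eq_iff by simp
  qed
  then have "sq ` CL = CL" using endo_inj_surj[OF _ sq_CL] S(1) unfolding CL_def by simp
  then obtain C where C: "C \<in> CL" "sq C = residue_class u" using in_CL[OF u] by (metis imageE)
  then obtain x where x: "x \<in> S" "C = residue_class x" unfolding CL_def by blast
  have "residue_class (x^2) = residue_class u" using C sq_class[of x] x SO by simp
  then have "1 \<le> val (x^2 - u)"
    using residue_class_eq_iff[of "x^2" u] u SO[OF x(1)] by (simp add: val_mult power2_eq_square)
  then have "1 \<le> val (u - x^2)" using val_uminus[of "x^2 - u"] by simp
  then show ?thesis ..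
qed

text \<open>Write c = z^2 u with u a unit and approximate u by a square modulo the maximal ideal.\<close>
lemma dd_ge_one_if_even_ord:
  assumes c: "c \<noteq> 0" and even: "even (ord c)"
  shows "1 \<le> dd ord c"
proof -
  obtain h where h: "ord c = 2 * h" using even by (metis evenE)
  define z where "z = uniformizer powi h"
  have z: "z \<noteq> 0" "ord z = h" unfolding z_def using uniformizer ord_uniformizer_powi by auto
  define u where "u = c / z^2"
  have u: "u \<noteq> 0" "ord u = 0" unfolding u_def using c z h by (auto simp: ord_divide ord_power)
  obtain x where x: "1 \<le> val (u - x^2)" using exists_square_congruent[of u] u by (auto simp: val_nonzero)
  have "c - (z * x)^2 = z^2 * (u - x^2)"
    unfolding u_def using z by (simp add: algebra_simps power2_eq_square)
  moreover have "ereal (of_int (2 * h)) \<le> val (z^2)" using z by (simp add: val_nonzero ord_power)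
  moreover have "ereal (of_int 1) \<le> val (u - x^2)" using x by (simp add: one_ereal_def)
  ultimately have "ereal (of_int (ord c + 1)) \<le> val (c - (z * x)^2)"
    using val_ge_mult h by metis
  then have "ereal (of_int 1) \<le> dd ord c" using dd_ge_iff[OF c, of 1] by blast
  then show ?thesis by (simp add: one_ereal_def)
qed

lemma odd_ord_if_dd_less_one: "c \<noteq> 0 \<Longrightarrow> dd ord c < 1 \<Longrightarrow> odd (ord c)"
  using dd_ge_one_if_even_ord by fastforce

lemma ord_pr: "(\<And>l. 1 \<le> l \<Longrightarrow> l \<le> j \<Longrightarrow> a l \<noteq> 0) \<Longrightarrow> ord (pr a 1 j) = (\<Sum>i = 1..j. ord (a i))"
proof (induction j)
  case (Suc j)
  have "pr a 1 j \<noteq> 0" using Suc.prems by (intro pr_nonzero) auto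
  then have "ord (pr a 1 (Suc j)) = ord (pr a 1 j) + ord (a (Suc j))"
    using Suc.prems by (simp add: pr_Suc ord_mult)
  then show ?case using Suc by (simp add: sum.atLeast_Suc_atMost_Suc_shift)
qed (simp add: pr_def)

lemma dd_mult_eq_if_less:
  assumes c: "c \<noteq> 0" and w: "w \<noteq> 0" and less: "dd ord c < dd ord w"
  shows "dd ord (c * w) = dd ord c"
proof (rule antisym)
  show "dd ord c \<le> dd ord (c * w)" using dd_mult_ge_min[OF c w] less by simp
  show "dd ord (c * w) \<le> dd ord c"
  proof (rule ccontr)
    assume "\<not> ?thesis"
    then have "dd ord c < min (dd ord (c * w)) (dd ord w)" using less by simp
    also have "\<dots> \<le> dd ord (c * w * w)" using c w by (intro dd_mult_ge_min) simp_all
    also have "c * w * w = c * w^2" by (simp add: power2_eq_square)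
    finally show False using dd_mult_square[OF c w] by simp
  qed
qed

text \<open>The signs cancel: a_{1,2h} b_{1,2h} is the product of the pairs -a_j a_{j+1} and
  -b_j b_{j+1}, j odd.\<close>
lemma dd_pr_ge_if_pairs_ge:
  assumes "\<forall>l. 1 \<le> l \<and> l \<le> 2 * h \<longrightarrow> a l \<noteq> 0" "\<forall>l. 1 \<le> l \<and> l \<le> 2 * h \<longrightarrow> b l \<noteq> 0"
    and "\<forall>j. odd j \<and> j < 2 * h \<longrightarrow> K \<le> dd ord (- a j * a (j + 1))"
    and "\<forall>j. odd j \<and> j < 2 * h \<longrightarrow> K \<le> dd ord (- b j * b (j + 1))"
  shows "K \<le> dd ord (pr a 1 (2 * h) * pr b 1 (2 * h))"
  using assms
proof (induction h)
  case 0
  then show ?case using dd_one by (simp add: pr_def)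
next
  case (Suc h)
  define w where "w = pr a 1 (2 * h) * pr b 1 (2 * h)"
  define ca where "ca = - a (2 * h + 1) * a (2 * h + 1 + 1)"
  define cb where "cb = - b (2 * h + 1) * b (2 * h + 1 + 1)"
  have pair: "odd (2 * h + 1)" "2 * h + 1 < 2 * Suc h" by simp_all
  have "w \<noteq> 0" unfolding w_def using Suc.prems(1,2) by (auto intro!: pr_nonzero)
  moreover have "ca \<noteq> 0" "cb \<noteq> 0" unfolding ca_def cb_def using Suc.prems(1,2) by auto
  moreover have "K \<le> dd ord w" unfolding w_def using Suc by auto
  moreover have "K \<le> dd ord ca" "K \<le> dd ord cb"
    using Suc.prems(3,4) pair unfolding ca_def cb_def by blast+
  ultimately have "K \<le> dd ord (w * (ca * cb))"
    by (metis dd_mult_ge_min min.bounded_iff mult_eq_0_iff order.trans)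
  moreover have "pr a 1 (2 * Suc h) * pr b 1 (2 * Suc h) = w * (ca * cb)"
    unfolding w_def ca_def cb_def by (simp add: pr_Suc algebra_simps numeral_2_eq_2)
  ultimately show ?case by simp
qed

section \<open>Norms of good BONGs\<close>

lemma qf_mem_norm_ideal: "z \<in> L \<Longrightarrow> qf G k z \<in> norm_ideal ord G k L"
  unfolding norm_ideal_def
  by (rule CollectI, rule exI[of _ 1], rule exI[of _ "\<lambda>_. 1"], rule exI[of _ "\<lambda>_. z"])
    (simp add: intO_def)

lemma O_module_O_span: "O_module ord (O_span ord gs)"
proof -
  let ?lc = "\<lambda>c i. \<Sum>j<length gs. c j * (gs ! j) i"
  have span: "O_span ord gs = {?lc c | c. \<forall>j. c j \<in> intO ord}" unfolding O_span_def ..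
  have "(\<lambda>i. ?lc c i + ?lc c' i) \<in> O_span ord gs"
    if "\<forall>j. c j \<in> intO ord" "\<forall>j. c' j \<in> intO ord" for c c'
  proof -
    have "(\<lambda>i. ?lc c i + ?lc c' i) = ?lc (\<lambda>j. c j + c' j)" by (simp add: algebra_simps sum.distrib)
    moreover have "\<forall>j. c j + c' j \<in> intO ord" using that val_add_ge unfolding mem_intO_iff by blast
    ultimately show ?thesis unfolding span mem_Collect_eq by (intro exI[of _ "\<lambda>j. c j + c' j"]) simp
  qed
  moreover have "(\<lambda>i. d * ?lc c i) \<in> O_span ord gs"
    if "d \<in> intO ord" "\<forall>j. c j \<in> intO ord" for c d
  proof -
    have "(\<lambda>i. d * ?lc c i) = ?lc (\<lambda>j. d * c j)" by (simp add: algebra_simps sum_distrib_left)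
    moreover have "\<forall>j. d * c j \<in> intO ord" using that unfolding mem_intO_iff by (simp add: val_mult)
    ultimately show ?thesis unfolding span mem_Collect_eq by (intro exI[of _ "\<lambda>j. d * c j"]) simp
  qed
  ultimately show ?thesis unfolding O_module_def by (auto simp: span)
qed

lemma val_ge_norm_generator:
  assumes NI: "norm_ideal ord G k L = {qf G k x * c | c. c \<in> intO ord}"
    and x: "qf G k x \<noteq> 0" and z: "z \<in> L"
  shows "ereal (of_int (ord (qf G k x))) \<le> val (qf G k z)"
proof -
  obtain c where c: "qf G k z = qf G k x * c" "c \<in> intO ord"
    using qf_mem_norm_ideal[OF z, of G k] NI by auto
  have "ereal (of_int 0) \<le> val c" using c(2) mem_intO_iff by (simp add: zero_ereal_def)
  then show ?thesis using val_ge_mult[of "ord (qf G k x)" "qf G k x" 0 c] x c(1) by (simp add: val_nonzero)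
qed

text \<open>The coefficient t of x in proj_x y satisfies 2 t Q(x) = 2 B(x, y) = Q(y + x) - Q(y) - Q(x),
  which lies in Q(x) O_F.\<close>
lemma ord_proj_coeff_ge:
  assumes sym: "quad_space G k" and L: "O_module ord L" and x: "x \<in> L" and y: "y \<in> L"
    and A: "qf G k x \<noteq> 0" and NI: "norm_ideal ord G k L = {qf G k x * c | c. c \<in> intO ord}"
  shows "bil G k x y / qf G k x = 0 \<or> - eram ord \<le> ord (bil G k x y / qf G k x)"
proof -
  define a q t where "a = qf G k x" and "q = qf G k y" and "t = bil G k x y / a"
  note divides = val_ge_norm_generator[OF NI A]
  have va: "val a = ereal (of_int (ord a))" using A unfolding a_def by (simp add: val_nonzero)
  have q: "ereal (of_int (ord a)) \<le> val q" unfolding q_def a_def using divides[OF y] .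
  have "(\<lambda>i. y i + x i) \<in> L" using L x y unfolding O_module_def by blast
  then have "ereal (of_int (ord a)) \<le> val (qf G k (\<lambda>i. y i + x i))" unfolding a_def by (rule divides)
  then have sum: "ereal (of_int (ord a)) \<le> val (q + 2 * (t * a) + a)"
    using qf_add[OF sym, of y x] A unfolding q_def t_def a_def by simp
  have "2 * t * a = (q + 2 * (t * a) + a) - q - a" by simp
  then have ge: "ereal (of_int (ord a)) \<le> val (2 * t * a)"
    using val_diff_ge[OF val_diff_ge[OF sum q], of a] va by (simp add: mult.assoc)
  have "t = 0 \<or> - eram ord \<le> ord t"
  proof (cases "t = 0")
    case False
    moreover have "a \<noteq> 0" using A unfolding a_def .
    ultimately have "ord (2 * t * a) = eram ord + ord t + ord a"
      using two_neq_zero by (simp add: ord_mult eram_def)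
    then show ?thesis using ge False \<open>a \<noteq> 0\<close> two_neq_zero by (simp add: val_nonzero)
  qed simp
  then show ?thesis unfolding t_def a_def .
qed

text \<open>With a = Q(x) and t as above, a' = Q(proj_x y) = Q(y) - t^2 a where Q(y) \<in> a O_F.\<close>
lemma bong_step_bounds:
  assumes sym: "quad_space G k" and L: "O_module ord L" and x: "x \<in> L" and y: "y \<in> L"
    and A: "qf G k x \<noteq> 0" and NI: "norm_ideal ord G k L = {qf G k x * c | c. c \<in> intO ord}"
    and A': "qf G k (proj G k x y) \<noteq> 0"
  shows "ord (qf G k x) - 2 * eram ord \<le> ord (qf G k (proj G k x y))"
    and "ord (qf G k (proj G k x y)) < ord (qf G k x) \<Longrightarrow> even (ord (qf G k (proj G k x y)) - ord (qf G k x))"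
    and "ereal (of_int (ord (qf G k x) - ord (qf G k (proj G k x y))))
           \<le> dd ord (- qf G k x * qf G k (proj G k x y))"
proof -
  define a a' q t where "a = qf G k x" and "a' = qf G k (proj G k x y)" and "q = qf G k y"
    and "t = bil G k x y / a"
  have va: "val a = ereal (of_int (ord a))" using A unfolding a_def by (simp add: val_nonzero)
  have q: "ereal (of_int (ord a)) \<le> val q" unfolding q_def a_def using val_ge_norm_generator[OF NI A y] .
  have t: "t = 0 \<or> - eram ord \<le> ord t"
    unfolding t_def a_def by (rule ord_proj_coeff_ge[OF sym L x y A NI])
  have a': "a' = q - t^2 * a"
    unfolding a'_def q_def t_def a_def using qf_proj[OF sym A] by simp
  have "ereal (of_int (ord a - 2 * eram ord)) \<le> val q" by (rule val_ge_mono[OF q]) (use eram_pos in simp)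
  moreover have "ereal (of_int (ord a - 2 * eram ord)) \<le> val (t^2 * a)"
    using t A unfolding a_def by (cases "t = 0") (auto simp: val_nonzero ord_mult ord_power)
  ultimately have "ereal (of_int (ord a - 2 * eram ord)) \<le> val a'"
    unfolding a' by (rule val_diff_ge)
  then show "ord (qf G k x) - 2 * eram ord \<le> ord (qf G k (proj G k x y))"
    using A' unfolding a_def a'_def by (simp add: val_nonzero)
  show "even (ord (qf G k (proj G k x y)) - ord (qf G k x))"
    if "ord (qf G k (proj G k x y)) < ord (qf G k x)"
  proof -
    have "val (- a') < val q" using that q A' unfolding a_def a'_def by (cases "q = 0") (auto simp: val_nonzero)
    then have "val (- a' + q) = val (- a')" by (rule val_add_eq_of_less)
    moreover have "- a' + q = t^2 * a" unfolding a' by simp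
    ultimately have e: "val (t^2 * a) = ereal (of_int (ord a'))" using A' unfolding a'_def by (simp add: val_nonzero)
    then have "t \<noteq> 0" by auto
    then have "2 * ord t + ord a = ord a'" using e A unfolding a_def by (simp add: val_nonzero ord_mult ord_power)
    then show ?thesis unfolding a_def a'_def by presburger
  qed
  \<comment> \<open>-a a' differs from the square (t a)^2 by a q, whose order is at least 2 ord a\<close>
  have "- a * a' - (t * a)^2 = a * (- q)" unfolding a' by (simp add: algebra_simps power2_eq_square)
  moreover have "ereal (of_int (ord a + ord a)) \<le> val (a * (- q))"
    using val_ge_mult[of "ord a" a "ord a" "- q"] va q by simp
  ultimately have "ereal (of_int (ord (- a * a') + (ord a - ord a'))) \<le> val (- a * a' - (t * a)^2)"
    using A A' unfolding a_def a'_def by (simp add: ord_mult)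
  then show "ereal (of_int (ord (qf G k x) - ord (qf G k (proj G k x y))))
      \<le> dd ord (- qf G k x * qf G k (proj G k x y))"
    using dd_ge_iff[of "- a * a'" "ord a - ord a'"] A A' unfolding a_def a'_def by auto
qed

definition bong_conditions :: "(nat \<Rightarrow> 'a) \<Rightarrow> nat \<Rightarrow> bool" where
  "bong_conditions a m \<longleftrightarrow>
     (\<forall>i. 1 \<le> i \<and> i \<le> m \<longrightarrow> a i \<noteq> 0) \<and> (1 \<le> m \<longrightarrow> 0 \<le> ord (a 1)) \<and>
     (\<forall>i. 1 \<le> i \<and> i + 2 \<le> m \<longrightarrow> ord (a i) \<le> ord (a (i + 2))) \<and>
     (\<forall>i. 1 \<le> i \<and> i < m \<longrightarrow> ord (a i) - 2 * eram ord \<le> ord (a (i + 1)) \<and>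
        (ord (a (i + 1)) < ord (a i) \<longrightarrow> even (ord (a (i + 1)) - ord (a i))) \<and>
        ereal (of_int (ord (a i) - ord (a (i + 1)))) \<le> dd ord (- a i * a (i + 1)))"

lemma good_bong_repr_consecutive:
  assumes sym: "quad_space G k" and M: "O_module ord M" and xs: "good_bong ord G k M xs"
    and a: "\<forall>i\<in>{1..m}. qf G k (xs ! (i - 1)) = a i" and m: "length xs = m"
    and i: "1 \<le> i" "i < m"
  shows "ord (a i) - 2 * eram ord \<le> ord (a (i + 1)) \<and>
    (ord (a (i + 1)) < ord (a i) \<longrightarrow> even (ord (a (i + 1)) - ord (a i))) \<and>
    ereal (of_int (ord (a i) - ord (a (i + 1)))) \<le> dd ord (- a i * a (i + 1))"
proof -
  have bong: "is_bong ord G k M xs" using xs unfolding good_bong_def by blast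
  define p where "p = i - 1"
  have p: "p < length xs" "Suc p < length xs" "Suc p = i" using i m unfolding p_def by auto
  note at_p = is_bong_nth[OF bong p(1)]
  obtain y where y: "y \<in> proj_iter G k M xs p" "xs ! Suc p = proj G k (xs ! p) y"
    using at_p p(2) by blast
  have "qf G k (xs ! Suc p) \<noteq> 0" using is_bong_nth[OF bong p(2)] by blast
  moreover have "qf G k (xs ! p) = a i" using a i m unfolding p_def by force
  moreover have "qf G k (xs ! Suc p) = a (i + 1)" using a[rule_format, of "i + 1"] i p(3) by simp
  ultimately show ?thesis
    using bong_step_bounds[OF sym O_module_proj_iter[OF M] _ y(1), of "xs ! p"] at_p y(2) by auto
qed

lemma bong_conditions_if_good_bong_repr:
  assumes sym: "quad_space G k" and M: "is_lattice ord k M" and int: "integral ord G k M"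
    and repr: "good_bong_repr ord G k M a m"
  shows "bong_conditions a m"
proof -
  obtain xs where xs: "length xs = m" "good_bong ord G k M xs" "\<forall>i\<in>{1..m}. qf G k (xs ! (i - 1)) = a i"
    using repr unfolding good_bong_repr_def by blast
  have bong: "is_bong ord G k M xs" using xs(2) unfolding good_bong_def by blast
  have "O_module ord M" using M O_module_O_span unfolding is_lattice_def by blast
  note consecutive = good_bong_repr_consecutive[OF sym this xs(2) xs(3) xs(1)]
  have nonzero: "\<forall>i. 1 \<le> i \<and> i \<le> m \<longrightarrow> a i \<noteq> 0"
  proof (intro allI impI)
    fix i assume "1 \<le> i \<and> i \<le> m"
    then show "a i \<noteq> 0" using is_bong_nth[OF bong, of "i - 1"] xs(1) xs(3) by force
  qed
  moreover have "1 \<le> m \<longrightarrow> 0 \<le> ord (a 1)"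
  proof
    assume m: "1 \<le> m"
    have "xs ! 0 \<in> M" using is_bong_nth[OF bong, of 0] xs(1) m by simp
    then have "qf G k (xs ! 0) \<in> intO ord" using int unfolding integral_def by blast
    moreover have "qf G k (xs ! 0) = a 1" using xs(3) m by force
    ultimately show "0 \<le> ord (a 1)" using nonzero m unfolding intO_def by simp
  qed
  moreover have "\<forall>i. 1 \<le> i \<and> i + 2 \<le> m \<longrightarrow> ord (a i) \<le> ord (a (i + 2))"
  proof (intro allI impI)
    fix i assume i: "1 \<le> i \<and> i + 2 \<le> m"
    then have "i - 1 + 2 < length xs" using xs(1) by simp
    then have "ord (qf G k (xs ! (i - 1))) \<le> ord (qf G k (xs ! (i - 1 + 2)))"
      using xs(2) unfolding good_bong_def by blast
    moreover have "qf G k (xs ! (i - 1)) = a i" using xs(3) i by force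
    moreover have "qf G k (xs ! (i - 1 + 2)) = a (i + 2)"
      using xs(3)[rule_format, of "i + 2"] i by (simp add: Suc_diff_le)
    ultimately show "ord (a i) \<le> ord (a (i + 2))" by simp
  qed
  ultimately show ?thesis unfolding bong_conditions_def using consecutive by blast
qed

lemma bong_nonzero: "bong_conditions a m \<Longrightarrow> 1 \<le> i \<Longrightarrow> i \<le> m \<Longrightarrow> a i \<noteq> 0"
  unfolding bong_conditions_def by blast

lemma bong_ord_first_nonneg: "bong_conditions a m \<Longrightarrow> 1 \<le> m \<Longrightarrow> 0 \<le> ord (a 1)"
  unfolding bong_conditions_def by blast

lemma bong_ord_le_ord_add_two:
  "bong_conditions a m \<Longrightarrow> 1 \<le> i \<Longrightarrow> i + 2 \<le> m \<Longrightarrow> ord (a i) \<le> ord (a (i + 2))"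
  unfolding bong_conditions_def by blast

lemma bong_ord_Suc_ge:
  "bong_conditions a m \<Longrightarrow> 1 \<le> i \<Longrightarrow> i < m \<Longrightarrow> ord (a i) - 2 * eram ord \<le> ord (a (i + 1))"
  unfolding bong_conditions_def by blast

lemma bong_even_if_ord_Suc_less:
  "bong_conditions a m \<Longrightarrow> 1 \<le> i \<Longrightarrow> i < m \<Longrightarrow> ord (a (i + 1)) < ord (a i) \<Longrightarrow>
    even (ord (a (i + 1)) - ord (a i))"
  unfolding bong_conditions_def by blast

lemma bong_dd_ge:
  "bong_conditions a m \<Longrightarrow> 1 \<le> i \<Longrightarrow> i < m \<Longrightarrow>
    ereal (of_int (ord (a i) - ord (a (i + 1)))) \<le> dd ord (- a i * a (i + 1))"
  unfolding bong_conditions_def by blast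

lemma bong_dd_nonneg: "bong_conditions a m \<Longrightarrow> 1 \<le> i \<Longrightarrow> i < m \<Longrightarrow> 0 \<le> dd ord (- a i * a (i + 1))"
  using bong_nonzero[of a m i] bong_nonzero[of a m "i + 1"] by (intro dd_nonneg) simp

lemma bong_ord_mono_even:
  assumes "bong_conditions a m" "1 \<le> i" "i \<le> j" "j \<le> m" "even (j - i)"
  shows "ord (a i) \<le> ord (a j)"
proof -
  obtain t where "j - i = 2 * t" using assms(5) by (rule evenE)
  then have "j = i + 2 * t" using assms(3) by simp
  moreover have "i + 2 * t \<le> m \<Longrightarrow> ord (a i) \<le> ord (a (i + 2 * t))"
  proof (induction t)
    case (Suc t)
    then have "ord (a i) \<le> ord (a (i + 2 * t))" by simp
    also have "\<dots> \<le> ord (a (i + 2 * t + 2))"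
      using bong_ord_le_ord_add_two[OF assms(1), of "i + 2 * t"] Suc.prems assms(2) by simp
    finally show ?case by (simp add: algebra_simps)
  qed simp
  ultimately show ?thesis using assms(4) by blast
qed

lemma bong_exists_parity_change:
  assumes b: "bong_conditions b n" and p: "1 \<le> p" "p \<le> q" "q \<le> n"
    and parity: "even (ord (b q)) \<noteq> even (ord (b p))"
  shows "\<exists>j. p \<le> j \<and> j < q \<and> odd (ord (b (j + 1)) - ord (b j)) \<and> even (ord (b j)) = even (ord (b p)) \<and>
    (ord (b p) \<le> ord (b j) \<or> odd (j - p))"
  using p(2,3) parity
proof (induction q rule: dec_induct)
  case (step q)
  show ?case
  proof (cases "even (ord (b q)) = even (ord (b p))")
    case False
    then obtain j where "p \<le> j \<and> j < q \<and> odd (ord (b (j + 1)) - ord (b j)) \<and>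
        even (ord (b j)) = even (ord (b p)) \<and> (ord (b p) \<le> ord (b j) \<or> odd (j - p))"
      using step by auto
    then show ?thesis by (intro exI[of _ j]) auto
  next
    case True
    then have "odd (ord (b (q + 1)) - ord (b q))" using step.prems by auto
    moreover have "ord (b p) \<le> ord (b q) \<or> odd (q - p)"
      using bong_ord_mono_even[OF b p(1) step.hyps(1)] step.prems by auto
    ultimately show ?thesis using True step.hyps by (intro exI[of _ q]) auto
  qed
qed simp

lemma bong_ord_odd_nonneg:
  assumes "bong_conditions b n" "odd j" "1 \<le> j" "j \<le> n"
  shows "0 \<le> ord (b j)"
  using bong_ord_first_nonneg[OF assms(1)] bong_ord_mono_even[OF assms(1), of 1 j] assms by simp

text \<open>The small defect at the pair (j0, j0 + 1) bounds ord b_{j0+1} from below; as the parities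
  of ord b_{j0+1} and ord b_n differ, some later j with ord b_{j+1} - ord b_j odd has ord b_j above
  that bound.\<close>
lemma bong_exists_odd_step_ge_one:
  assumes b: "bong_conditions b n" and n: "odd n" and j0: "odd j0" "1 \<le> j0" "j0 + 1 < n"
    and ord_j0: "ord (b j0) = 0" and dd_j0: "dd ord (- b j0 * b (j0 + 1)) < 1"
    and ord_n: "even (ord (b n))"
  shows "\<exists>j. 1 \<le> j \<and> j < n \<and> odd (ord (b (j + 1)) - ord (b j)) \<and> 1 \<le> ord (b j)"
proof -
  define p where "p = j0 + 1"
  have p: "1 \<le> p" "p \<le> n" "even p" using j0 unfolding p_def by auto
  have nz: "b j0 \<noteq> 0" "b p \<noteq> 0" using bong_nonzero[OF b] j0 p unfolding p_def by auto
  have "odd (ord (- b j0 * b p))" using odd_ord_if_dd_less_one[OF _ dd_j0] nz unfolding p_def by simp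
  then have odd_p: "odd (ord (b p))" using ord_j0 nz by (simp add: ord_mult)
  have "\<not> ord (b p) < ord (b j0)"
    using bong_even_if_ord_Suc_less[OF b, of j0] odd_p ord_j0 j0 unfolding p_def by auto
  then have ge_p: "1 \<le> ord (b p)" using ord_j0 odd_p by presburger
  obtain j where j: "p \<le> j" "j < n" "odd (ord (b (j + 1)) - ord (b j))"
    "even (ord (b j)) = even (ord (b p))" "ord (b p) \<le> ord (b j) \<or> odd (j - p)"
    using bong_exists_parity_change[OF b p(1,2) order_refl] odd_p ord_n by auto
  have "1 \<le> ord (b j)"
  proof (cases "ord (b p) \<le> ord (b j)")
    case False
    then have "odd j" using j(5) p(3) by presburger
    then have "0 \<le> ord (b j)" using bong_ord_odd_nonneg[OF b] j(1,2) p(1) by simp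
    then show ?thesis using j(4) odd_p by presburger
  qed (use ge_p in simp)
  moreover have "1 \<le> j" using j(1) p(1) by simp
  ultimately show ?thesis using j(2,3) by blast
qed

lemma bong_exists_odd_step_ge_even:
  assumes b: "bong_conditions b n" and n: "odd n" and j0: "odd j0" "1 \<le> j0" "j0 + 1 < n"
    and ord_j0: "ord (b j0) = 0" and dd_j0: "dd ord (- b j0 * b (j0 + 1)) \<le> ereal (of_int (1 - r))"
    and r: "r \<le> 0" "even r" and ord_n: "odd (ord (b n))"
  shows "\<exists>j. 1 \<le> j \<and> j < n \<and> odd (ord (b (j + 1)) - ord (b j)) \<and> r \<le> ord (b j)"
proof (cases "odd (ord (b (j0 + 1)))")
  case True
  then show ?thesis using j0 ord_j0 r by (intro exI[of _ j0]) auto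
next
  case False
  define p where "p = j0 + 1"
  have p: "1 \<le> p" "p \<le> n" "even p" using j0 unfolding p_def by auto
  have "ereal (of_int (ord (b j0) - ord (b p))) \<le> ereal (of_int (1 - r))"
    using bong_dd_ge[OF b, of j0] j0 dd_j0 unfolding p_def by (meson order.trans le_add1 le_less_trans)
  then have "r - 1 \<le> ord (b p)" using ord_j0 by simp
  then have r_p: "r \<le> ord (b p)" using False r(2) unfolding p_def by presburger
  obtain j where j: "p \<le> j" "j < n" "odd (ord (b (j + 1)) - ord (b j))"
    "ord (b p) \<le> ord (b j) \<or> odd (j - p)"
    using bong_exists_parity_change[OF b p(1,2) order_refl] False ord_n unfolding p_def by auto
  have "r \<le> ord (b j)"
  proof (cases "ord (b p) \<le> ord (b j)")
    case False
    then have "odd j" using j(4) p(3) by presburger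
    then show ?thesis using bong_ord_odd_nonneg[OF b] j(1,2) p(1) r(1) by fastforce
  qed (use r_p in simp)
  moreover have "1 \<le> j" using j(1) p(1) by simp
  ultimately show ?thesis using j(2,3) by blast
qed

end

section \<open>The inequality\<close>

locale bong_pair = dyadic_valuation +
  fixes a :: "nat \<Rightarrow> 'a" and m :: nat and b :: "nat \<Rightarrow> 'a" and n :: nat
  assumes a: "bong_conditions a m" and b: "bong_conditions b n"
    and n: "3 \<le> n" "odd n" "n + 1 \<le> m"
    and ord_a_pred_n: "ord (a (n - 1)) = - 2 * eram ord" and ord_a_n: "ord (a n) = 0"
begin

lemma ord_a_odd:
  assumes "odd i" "1 \<le> i" "i \<le> n"
  shows "ord (a i) = 0"
proof -
  have "0 \<le> ord (a 1)" using bong_ord_first_nonneg[OF a] n by simp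
  moreover have "ord (a 1) \<le> ord (a i)" using bong_ord_mono_even[OF a, of 1 i] assms n by auto
  moreover have "ord (a i) \<le> ord (a n)" using bong_ord_mono_even[OF a, of i n] assms n by auto
  ultimately show ?thesis using ord_a_n by simp
qed

lemma ord_a_even:
  assumes "even i" "2 \<le> i" "i \<le> n - 1"
  shows "ord (a i) = - 2 * eram ord"
proof -
  have "ord (a (i - 1)) = 0" using ord_a_odd[of "i - 1"] assms by auto
  then have "- 2 * eram ord \<le> ord (a i)" using bong_ord_Suc_ge[OF a, of "i - 1"] assms n by auto
  moreover have "ord (a i) \<le> ord (a (n - 1))" using bong_ord_mono_even[OF a, of i "n - 1"] assms n by auto
  ultimately show ?thesis using ord_a_pred_n by simp
qed

lemma a_nonzero: "1 \<le> i \<Longrightarrow> i \<le> n + 1 \<Longrightarrow> a i \<noteq> 0"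
  using bong_nonzero[OF a] n by simp

lemma b_nonzero: "1 \<le> i \<Longrightarrow> i \<le> n \<Longrightarrow> b i \<noteq> 0"
  using bong_nonzero[OF b] by simp

lemma ord_b_even_if_ord_b_n_zero:
  assumes S_n: "ord (b n) = 0" and i: "1 \<le> i" "i \<le> n"
  shows "even (ord (b i))"
proof -
  have ord_odd: "ord (b j) = 0" if "odd j" "1 \<le> j" "j \<le> n" for j
    using bong_ord_odd_nonneg[OF b that] bong_ord_mono_even[OF b, of j n] that n S_n by simp
  show ?thesis
  proof (cases "odd i")
    case False
    then have j: "2 \<le> i" "i + 1 \<le> n" using i n by (auto, presburger)
    have "ord (b (i - 1)) = 0" "ord (b (i + 1)) = 0" using ord_odd False i j by auto
    moreover have "even (ord (b (i - 1 + 1)) - ord (b (i - 1)))" if "ord (b i) < ord (b (i - 1))"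
      using bong_even_if_ord_Suc_less[OF b, of "i - 1"] that i j by auto
    moreover have "even (ord (b (i + 1)) - ord (b i))" if "ord (b (i + 1)) < ord (b i)"
      using bong_even_if_ord_Suc_less[OF b, of i] that j by auto
    ultimately show ?thesis using j by (cases "ord (b i)" "0 :: int" rule: linorder_cases) auto
  qed (use ord_odd i in simp)
qed

lemma dd_pr_ge_one_if_ord_b_n_zero:
  assumes "ord (b n) = 0"
  shows "1 \<le> dd ord (pr a 1 n * pr b 1 n)"
proof (rule dd_ge_one_if_even_ord)
  have "even (ord (a i))" if "i \<in> {1..n}" for i
    using ord_a_odd[of i] ord_a_even[of i] that n by (cases "odd i") (auto, presburger)
  then have "even (\<Sum>i = 1..n. ord (a i))" by (rule dvd_sum)
  moreover have "even (\<Sum>i = 1..n. ord (b i))"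
    using ord_b_even_if_ord_b_n_zero[OF assms] by (intro dvd_sum) simp
  moreover have "ord (pr a 1 n * pr b 1 n) = (\<Sum>i = 1..n. ord (a i)) + (\<Sum>i = 1..n. ord (b i))"
    using a_nonzero b_nonzero pr_nonzero[of 1 n a] pr_nonzero[of 1 n b] ord_pr[of n a] ord_pr[of n b]
    by (simp add: ord_mult)
  ultimately show "even (ord (pr a 1 n * pr b 1 n))" by simp
  show "pr a 1 n * pr b 1 n \<noteq> 0" using a_nonzero b_nonzero by (simp add: pr_nonzero)
qed

lemma ord_a_Suc_n_ge:
  assumes "alpha ord a m n = 1"
  shows "2 - 2 * eram ord \<le> ord (a (n + 1))"
proof -
  have "(1::ereal) \<le> ereal ((of_int (ord (a (n + 1))) - of_int (ord (a n))) / 2 + of_int (eram ord))"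
    using alpha_le_first[of ord a m n] assms by simp
  then show ?thesis using ord_a_n by simp
qed

text \<open>For j < n this follows from the known R_j; for j \<ge> n the term exceeds the corresponding term
  of \<alpha>_n = 1 by R_n - R_{n-1} = 2e.\<close>
lemma Tterm_pred_n_ge:
  assumes alpha_n: "alpha ord a m n = 1" and j: "1 \<le> j" "j \<le> m - 1"
  shows "ereal (of_int (2 * eram ord)) \<le> Tterm ord a (n - 1) j"
proof (cases "j \<le> n - 1")
  case True
  have T: "Tterm ord a (n - 1) j = ereal (of_int (- ord (a j))) + dd ord (- a j * a (j + 1))"
    unfolding Tterm_def using True n ord_a_n by simp
  show ?thesis
  proof (cases "odd j")
    case True
    have "even (j + 1)" "j + 1 \<le> n - 1" using True \<open>j \<le> n - 1\<close> n by presburger+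
    then have "ord (a j) - ord (a (j + 1)) = 2 * eram ord"
      using ord_a_odd[of j] ord_a_even[of "j + 1"] True j \<open>j \<le> n - 1\<close> by simp
    then show ?thesis
      unfolding T using bong_dd_ge[OF a, of j] j ord_a_odd[of j] True \<open>j \<le> n - 1\<close>
      by (subst ereal_of_int_le_add_iff) simp
  next
    case False
    then have "2 \<le> j" using j(1) by presburger
    then have "ord (a j) = - 2 * eram ord" using ord_a_even[of j] False \<open>j \<le> n - 1\<close> by simp
    then show ?thesis
      unfolding T using bong_dd_nonneg[OF a, of j] j by (subst ereal_of_int_le_add_iff) (simp add: zero_ereal_def)
  qed
next
  case False
  then have T: "Tterm ord a (n - 1) j = ereal (of_int (ord (a (j + 1)) + 2 * eram ord)) + dd ord (- a j * a (j + 1))"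
    unfolding Tterm_def using ord_a_pred_n by simp
  have "1 \<le> Tterm ord a n j" using alpha_le_Tterm[OF j, of ord a n] alpha_n by simp
  moreover have "Tterm ord a n j = ereal (of_int (ord (a (j + 1)))) + dd ord (- a j * a (j + 1))"
    unfolding Tterm_def using False n ord_a_n by (cases "j = n") auto
  ultimately have "ereal (of_int (1 - ord (a (j + 1)))) \<le> dd ord (- a j * a (j + 1))"
    using ereal_of_int_le_add_iff[of 1] by (simp add: one_ereal_def)
  then show ?thesis unfolding T using eram_pos
    by (subst ereal_of_int_le_add_iff) (simp add: order_trans[rotated])
qed

lemma alpha_pred_n_ge:
  assumes "alpha ord a m n = 1"
  shows "ereal (of_int (2 * eram ord)) \<le> alpha ord a m (n - 1)"
proof (rule le_alpha)
  have "n - 1 + 1 = n" using n by simp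
  then show "ereal (of_int (2 * eram ord))
      \<le> ereal ((of_int (ord (a (n - 1 + 1))) - of_int (ord (a (n - 1)))) / 2 + of_int (eram ord))"
    using ord_a_n ord_a_pred_n by simp
qed (rule Tterm_pred_n_ge[OF assms])

lemma dd_or_alpha_Suc_n_eq:
  assumes alpha_n: "alpha ord a m n = 1"
    and dcond: "dA ord a m (-1) n (n + 1) = ereal (of_int (1 - ord (a (n + 1))))"
  shows "dd ord (- a n * a (n + 1)) = ereal (of_int (1 - ord (a (n + 1)))) \<or>
    (n + 1 \<noteq> m \<and> alpha ord a m (n + 1) = ereal (of_int (1 - ord (a (n + 1)))))"
proof -
  have "ereal (of_int (1 - ord (a (n + 1)))) < ereal (of_int (2 * eram ord))"
    using ord_a_Suc_n_ge[OF alpha_n] by simp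
  then have "dA ord a m (-1) n (n + 1) < alpha ord a m (n - 1)"
    unfolding dcond using alpha_pred_n_ge[OF alpha_n] by (rule order.strict_trans2)
  then have "dA ord a m (-1) n (n + 1) \<noteq> alpha ord a m (n - 1)" by simp
  moreover have "pr a n (n + 1) = a n * a (n + 1)" using pr_Suc[of n n a] by (simp add: pr_def)
  ultimately show ?thesis using dA_cases[of ord a m "-1" n "n + 1"] dcond by auto
qed

lemma pr_pred_n_nonzero: "pr a 1 (n - 1) * pr b 1 (n - 1) \<noteq> 0"
  using a_nonzero b_nonzero by (simp add: pr_nonzero)

lemma pr_n_eq: "pr a 1 n * pr b 1 n = (pr a 1 (n - 1) * pr b 1 (n - 1)) * (a n * b n)"
proof -
  have "n = Suc (n - 1)" using n by simp
  then show ?thesis using pr_Suc[of 1 "n - 1" a] pr_Suc[of 1 "n - 1" b] by (simp add: algebra_simps)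
qed

lemma pr_Suc_n_eq:
  "- 1 * pr a 1 (n + 1) * pr b 1 (n - 1) = (- a n * a (n + 1)) * (pr a 1 (n - 1) * pr b 1 (n - 1))"
proof -
  have "n = Suc (n - 1)" using n by simp
  then show ?thesis using pr_Suc[of 1 "n - 1" a] pr_Suc[of 1 n a] by (simp add: algebra_simps)
qed

lemma ord_b_n_nonneg: "0 \<le> ord (b n)"
  using bong_ord_odd_nonneg[OF b] n by simp

lemma le_rhs_if_le_nonpos:
  assumes "x \<le> ereal (of_int k)" "k \<le> 0"
  shows "x \<le> min (dd ord (pr a 1 n * pr b 1 n)) 1"
proof -
  have "x \<le> 0" using assms by (simp add: order_trans zero_ereal_def)
  moreover have "0 \<le> dd ord (pr a 1 n * pr b 1 n)" using a_nonzero b_nonzero by (simp add: dd_nonneg pr_nonzero)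
  ultimately show ?thesis using order_trans[of x 0 1] by simp
qed

lemma le_rhs_if_le_one_minus_ord_b_n:
  assumes "x \<le> ereal (of_int (1 - ord (b n)))"
  shows "x \<le> min (dd ord (pr a 1 n * pr b 1 n)) 1"
proof (cases "ord (b n) = 0")
  case True
  then show ?thesis using assms dd_pr_ge_one_if_ord_b_n_zero by (simp add: one_ereal_def)
next
  case False
  then show ?thesis using assms ord_b_n_nonneg by (intro le_rhs_if_le_nonpos[of x "1 - ord (b n)"]) auto
qed

abbreviation lhs :: ereal where
  "lhs \<equiv> ereal (of_int (ord (a (n + 1)) - ord (b n))) + dAB ord a m b n (-1) (n + 1) (n - 1)"

lemma lhs_le_dd_pair:
  assumes "1 \<le> j" "j \<le> n - 1"
  shows "lhs \<le> ereal (of_int (ord (a (n + 1)) - ord (b j))) + dd ord (- b j * b (j + 1))"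
proof -
  have "dAB ord a m b n (-1) (n + 1) (n - 1) \<le> alpha ord b n (n - 1)"
    using n by (intro dAB_le_alpha_right) auto
  also have "\<dots> \<le> ereal (of_int (ord (b n) - ord (b j))) + dd ord (- b j * b (j + 1))"
    using assms by (rule alpha_pred_last_le)
  finally show ?thesis
    by (cases "dd ord (- b j * b (j + 1))"; cases "dAB ord a m b n (-1) (n + 1) (n - 1)") auto
qed

lemma lhs_le_if_odd_step:
  assumes "1 \<le> j" "j \<le> n - 1" "odd (ord (b (j + 1)) - ord (b j))"
  shows "lhs \<le> ereal (of_int (ord (a (n + 1)) - ord (b j)))"
proof -
  have "b j \<noteq> 0" "b (j + 1) \<noteq> 0" using b_nonzero assms by auto
  then have "dd ord (- b j * b (j + 1)) = 0" using assms(3) by (intro dd_eq_zero_if_odd_ord) (simp_all add: ord_mult)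
  then show ?thesis using lhs_le_dd_pair[OF assms(1,2)] by simp
qed

lemma lhs_le_if_alpha_Suc_n_eq:
  assumes "n + 1 \<noteq> m" and alpha: "alpha ord a m (n + 1) = ereal (of_int (1 - ord (a (n + 1))))"
  shows "lhs \<le> ereal (of_int (1 - ord (b n)))"
proof -
  have "dAB ord a m b n (-1) (n + 1) (n - 1) \<le> alpha ord a m (n + 1)"
    using assms(1) by (intro dAB_le_alpha_left) simp
  then have "dAB ord a m b n (-1) (n + 1) (n - 1) \<le> ereal (of_int (1 - ord (a (n + 1))))"
    using alpha by simp
  then show ?thesis by (cases "dAB ord a m b n (-1) (n + 1) (n - 1)") auto
qed

lemma lhs_le_if_dd_pr_pred_n_large:
  assumes dd_n: "dd ord (- a n * a (n + 1)) = ereal (of_int (1 - ord (a (n + 1))))"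
    and large: "ereal (of_int (2 - ord (a (n + 1)))) \<le> dd ord (pr a 1 (n - 1) * pr b 1 (n - 1))"
  shows "lhs \<le> ereal (of_int (1 - ord (b n)))"
proof -
  have "dd ord (- a n * a (n + 1)) < ereal (of_int (2 - ord (a (n + 1))))" using dd_n by simp
  then have "dd ord (- a n * a (n + 1)) < dd ord (pr a 1 (n - 1) * pr b 1 (n - 1))"
    using large by (rule order_less_le_trans)
  then have "dd ord (- 1 * pr a 1 (n + 1) * pr b 1 (n - 1)) = ereal (of_int (1 - ord (a (n + 1))))"
    unfolding pr_Suc_n_eq dd_n[symmetric] using a_nonzero n pr_pred_n_nonzero
    by (intro dd_mult_eq_if_less) auto
  then have "dAB ord a m b n (-1) (n + 1) (n - 1) \<le> ereal (of_int (1 - ord (a (n + 1))))"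
    using dAB_le_dd[of ord a m b n "-1" "n + 1" "n - 1"] by simp
  then show ?thesis by (cases "dAB ord a m b n (-1) (n + 1) (n - 1)") auto
qed

text \<open>All pairs -a_j a_{j+1}, j odd, have defect at least R_j - R_{j+1} = 2e, so the small defect
  of a_{1,n-1} b_{1,n-1} must come from a pair of b.\<close>
lemma exists_b_pair_dd_small:
  assumes alpha_n: "alpha ord a m n = 1"
    and small: "\<not> ereal (of_int (2 - ord (a (n + 1)))) \<le> dd ord (pr a 1 (n - 1) * pr b 1 (n - 1))"
  shows "\<exists>j. odd j \<and> 1 \<le> j \<and> j + 1 < n \<and> dd ord (- b j * b (j + 1)) \<le> ereal (of_int (1 - ord (a (n + 1))))"
proof -
  define h where "h = (n - 1) div 2"
  have h: "2 * h = n - 1" unfolding h_def using n by (auto elim!: oddE)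
  have a_pairs: "\<forall>j. odd j \<and> j < 2 * h \<longrightarrow> ereal (of_int (2 - ord (a (n + 1)))) \<le> dd ord (- a j * a (j + 1))"
  proof (intro allI impI)
    fix j assume j: "odd j \<and> j < 2 * h"
    have j1: "1 \<le> j" "j + 1 \<le> n - 1" using j h odd_pos[of j] by auto
    then have "ord (a j) - ord (a (j + 1)) = 2 * eram ord"
      using ord_a_odd[of j] ord_a_even[of "j + 1"] j n by simp
    then have "ereal (of_int (2 - ord (a (n + 1)))) \<le> ereal (of_int (ord (a j) - ord (a (j + 1))))"
      using ord_a_Suc_n_ge[OF alpha_n] by simp
    also have "\<dots> \<le> dd ord (- a j * a (j + 1))" using bong_dd_ge[OF a] j1 n by simp
    finally show "ereal (of_int (2 - ord (a (n + 1)))) \<le> dd ord (- a j * a (j + 1))" .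
  qed
  have "\<not> (\<forall>j. odd j \<and> j < 2 * h \<longrightarrow> ereal (of_int (2 - ord (a (n + 1)))) \<le> dd ord (- b j * b (j + 1)))"
  proof
    assume "\<forall>j. odd j \<and> j < 2 * h \<longrightarrow> ereal (of_int (2 - ord (a (n + 1)))) \<le> dd ord (- b j * b (j + 1))"
    then have "ereal (of_int (2 - ord (a (n + 1)))) \<le> dd ord (pr a 1 (2 * h) * pr b 1 (2 * h))"
      using a_pairs a_nonzero b_nonzero h by (intro dd_pr_ge_if_pairs_ge) auto
    then show False using small h by simp
  qed
  then obtain j where j: "odd j" "j < 2 * h" "\<not> ereal (of_int (2 - ord (a (n + 1)))) \<le> dd ord (- b j * b (j + 1))"
    by blast
  have "j \<ge> 1" "j + 1 < n" using j h odd_pos[of j] by auto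
  moreover have "dd ord (- b j * b (j + 1)) \<le> ereal (of_int (1 - ord (a (n + 1))))"
    using int_or_inf_le_if_not_ge[OF int_or_inf_dd j(3)] b_nonzero calculation by simp
  ultimately show ?thesis using j(1) by blast
qed

lemma dd_pr_Suc_n_eq_zero:
  assumes "odd (ord (pr a 1 n * pr b 1 n))" "even (ord (a (n + 1)) - ord (b n))"
  shows "dd ord (- 1 * pr a 1 (n + 1) * pr b 1 (n - 1)) = 0"
proof -
  have nz: "a n \<noteq> 0" "a (n + 1) \<noteq> 0" "b n \<noteq> 0" using a_nonzero b_nonzero n by auto
  have "ord (pr a 1 n * pr b 1 n) = ord (pr a 1 (n - 1) * pr b 1 (n - 1)) + ord (b n)"
    unfolding pr_n_eq using nz pr_pred_n_nonzero ord_a_n by (simp add: ord_mult)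
  moreover have "ord (- 1 * pr a 1 (n + 1) * pr b 1 (n - 1)) = ord (a (n + 1)) + ord (pr a 1 (n - 1) * pr b 1 (n - 1))"
    unfolding pr_Suc_n_eq using nz pr_pred_n_nonzero ord_a_n by (simp add: ord_mult)
  ultimately have "odd (ord (- 1 * pr a 1 (n + 1) * pr b 1 (n - 1)))" using assms by presburger
  moreover have "- 1 * pr a 1 (n + 1) * pr b 1 (n - 1) \<noteq> 0"
    unfolding pr_Suc_n_eq using nz pr_pred_n_nonzero by simp
  ultimately show ?thesis by (intro dd_eq_zero_if_odd_ord)
qed

lemma exists_odd_step_ge_ord_a_Suc_n:
  assumes j0: "odd j0" "1 \<le> j0" "j0 + 1 < n" and ord_j0: "ord (b j0) = 0"
    and dd_j0: "dd ord (- b j0 * b (j0 + 1)) \<le> ereal (of_int (1 - ord (a (n + 1))))"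
    and le_one: "ord (a (n + 1)) \<le> 1" and odd: "odd (ord (a (n + 1)) - ord (b n))"
  shows "\<exists>j. 1 \<le> j \<and> j < n \<and> odd (ord (b (j + 1)) - ord (b j)) \<and> ord (a (n + 1)) \<le> ord (b j)"
proof (cases "ord (a (n + 1)) = 1")
  case True
  then have "dd ord (- b j0 * b (j0 + 1)) < 1" using dd_j0 by (simp add: le_less_trans)
  then show ?thesis
    using bong_exists_odd_step_ge_one[OF b n(2) j0 ord_j0] odd True by simp
next
  case False
  have "ord (a (n + 1)) \<le> 0" using False le_one by simp
  moreover have "even (ord (a (n + 1)))"
  proof (cases "ord (a (n + 1)) < 0")
    case True
    then show ?thesis using bong_even_if_ord_Suc_less[OF a, of n] ord_a_n n by simp
  qed (use calculation in simp)
  moreover have "odd (ord (b n))" using odd calculation(2) by presburger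
  ultimately show ?thesis using bong_exists_odd_step_ge_even[OF b n(2) j0 ord_j0 dd_j0] by blast
qed

lemma lhs_le_one_minus_ord_b:
  assumes "1 \<le> j" "j \<le> n - 1" "dd ord (- b j * b (j + 1)) \<le> ereal (of_int (1 - ord (a (n + 1))))"
  shows "lhs \<le> ereal (of_int (1 - ord (b j)))"
proof -
  have "lhs \<le> ereal (of_int (ord (a (n + 1)) - ord (b j))) + dd ord (- b j * b (j + 1))"
    using lhs_le_dd_pair assms(1,2) by simp
  also have "\<dots> \<le> ereal (of_int (ord (a (n + 1)) - ord (b j))) + ereal (of_int (1 - ord (a (n + 1))))"
    using assms(3) by (rule add_left_mono)
  finally show ?thesis by simp
qed

lemma lhs_le_rhs_if_even_diff:
  assumes odd: "odd (ord (pr a 1 n * pr b 1 n))" and even: "even (ord (a (n + 1)) - ord (b n))"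
    and le_one: "ord (a (n + 1)) \<le> 1"
  shows "lhs \<le> min (dd ord (pr a 1 n * pr b 1 n)) 1"
proof -
  have "dAB ord a m b n (-1) (n + 1) (n - 1) \<le> 0"
    using dAB_le_dd[of ord a m b n "-1" "n + 1" "n - 1"] dd_pr_Suc_n_eq_zero[OF odd even] by simp
  then have "lhs \<le> ereal (of_int (ord (a (n + 1)) - ord (b n)))"
    using add_left_mono[of _ 0 "ereal (of_int (ord (a (n + 1)) - ord (b n)))"] by simp
  moreover have "ord (a (n + 1)) - ord (b n) \<le> 0" using even le_one ord_b_n_nonneg by presburger
  ultimately show ?thesis by (rule le_rhs_if_le_nonpos)
qed

lemma lhs_le_rhs_if_dd_pr_pred_n_small:
  assumes alpha_n: "alpha ord a m n = 1"
    and dd_n: "dd ord (- a n * a (n + 1)) = ereal (of_int (1 - ord (a (n + 1))))"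
    and small: "\<not> ereal (of_int (2 - ord (a (n + 1)))) \<le> dd ord (pr a 1 (n - 1) * pr b 1 (n - 1))"
  shows "lhs \<le> min (dd ord (pr a 1 n * pr b 1 n)) 1"
proof -
  obtain j0 where j0: "odd j0" "1 \<le> j0" "j0 + 1 < n"
    and dd_j0: "dd ord (- b j0 * b (j0 + 1)) \<le> ereal (of_int (1 - ord (a (n + 1))))"
    using exists_b_pair_dd_small[OF alpha_n small] by blast
  have lhs_j0: "lhs \<le> ereal (of_int (1 - ord (b j0)))" using lhs_le_one_minus_ord_b j0 dd_j0 by simp
  have S_j0: "0 \<le> ord (b j0)" using bong_ord_odd_nonneg[OF b j0(1,2)] j0(3) by simp
  have le_one: "ord (a (n + 1)) \<le> 1" using dd_n bong_dd_nonneg[OF a, of n] n by (simp add: zero_ereal_def)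
  show ?thesis
  proof (cases "1 \<le> dd ord (pr a 1 n * pr b 1 n)")
    case True
    then show ?thesis using lhs_j0 S_j0 by (simp add: one_ereal_def order_trans)
  next
    case False
    then have odd_n: "odd (ord (pr a 1 n * pr b 1 n))"
      using odd_ord_if_dd_less_one a_nonzero b_nonzero by (simp add: pr_nonzero)
    show ?thesis
    proof (cases "even (ord (a (n + 1)) - ord (b n))")
      case True
      then show ?thesis using lhs_le_rhs_if_even_diff[OF odd_n _ le_one] by simp
    next
      case odd: False
      show ?thesis
      proof (cases "ord (b j0) = 0")
        case True
        then obtain j where "1 \<le> j" "j < n" "odd (ord (b (j + 1)) - ord (b j))" "ord (a (n + 1)) \<le> ord (b j)"
          using exists_odd_step_ge_ord_a_Suc_n[OF j0 _ dd_j0 le_one odd] by blast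
        then show ?thesis
          using lhs_le_if_odd_step[of j] by (intro le_rhs_if_le_nonpos[of _ "ord (a (n + 1)) - ord (b j)"]) auto
      next
        case False
        then show ?thesis
          using lhs_j0 S_j0 by (intro le_rhs_if_le_nonpos[of _ "1 - ord (b j0)"]) auto
      qed
    qed
  qed
qed

lemma lhs_le_rhs:
  assumes alpha_n: "alpha ord a m n = 1"
    and dcond: "dA ord a m (-1) n (n + 1) = ereal (of_int (1 - ord (a (n + 1))))"
  shows "lhs \<le> dAB ord a m b n 1 n n"
proof -
  have rhs: "dAB ord a m b n 1 n n = min (dd ord (pr a 1 n * pr b 1 n)) 1"
    using dAB_last_right[of n m ord a b n 1] alpha_n n by simp
  have "lhs \<le> min (dd ord (pr a 1 n * pr b 1 n)) 1"
    using dd_or_alpha_Suc_n_eq[OF alpha_n dcond]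
  proof (elim disjE conjE)
    assume dd_n: "dd ord (- a n * a (n + 1)) = ereal (of_int (1 - ord (a (n + 1))))"
    show ?thesis
    proof (cases "ereal (of_int (2 - ord (a (n + 1)))) \<le> dd ord (pr a 1 (n - 1) * pr b 1 (n - 1))")
      case True
      then show ?thesis by (intro le_rhs_if_le_one_minus_ord_b_n lhs_le_if_dd_pr_pred_n_large[OF dd_n])
    next
      case False
      then show ?thesis by (rule lhs_le_rhs_if_dd_pr_pred_n_small[OF alpha_n dd_n])
    qed
  next
    assume "n + 1 \<noteq> m" "alpha ord a m (n + 1) = ereal (of_int (1 - ord (a (n + 1))))"
    then show ?thesis by (intro le_rhs_if_le_one_minus_ord_b_n lhs_le_if_alpha_Suc_n_eq)
  qed
  then show ?thesis unfolding rhs .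
qed

end

theorem lemma2p11:
  fixes ord :: "'a::field \<Rightarrow> int"
    and G :: "nat \<Rightarrow> nat \<Rightarrow> 'a" and k :: nat and M :: "(nat \<Rightarrow> 'a) set" and a :: "nat \<Rightarrow> 'a" and m :: nat
    and H :: "nat \<Rightarrow> nat \<Rightarrow> 'a" and l :: nat and N :: "(nat \<Rightarrow> 'a) set" and b :: "nat \<Rightarrow> 'a" and n :: nat
  assumes F: "dyadic_local_field ord"
    and VM: "quad_space G k" and LM: "is_lattice ord k M" and IM: "integral ord G k M"
    and BM: "good_bong_repr ord G k M a m"
    and VN: "quad_space H l" and LN: "is_lattice ord l N" and IN: "integral ord H l N"
    and BN: "good_bong_repr ord H l N b n"
    and n3: "n \<ge> 3" and nodd: "odd n" and mn: "m \<ge> n + 1"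
    and Rn1: "ord (a (n - 1)) = - 2 * eram ord"
    and Rn: "ord (a n) = 0"
    and alpha_n: "alpha ord a m n = 1"
    and dcond: "dA ord a m (-1) n (n + 1) = ereal (of_int (1 - ord (a (n + 1))))"
  shows "ereal (of_int (ord (a (n + 1)) - ord (b n))) + dAB ord a m b n (-1) (n + 1) (n - 1)
           \<le> dAB ord a m b n 1 n n"
proof -
  interpret dyadic_valuation ord by (rule dyadic_valuation.intro[OF F])
  interpret bong_pair ord a m b n
    using bong_conditions_if_good_bong_repr[OF VM LM IM BM] bong_conditions_if_good_bong_repr[OF VN LN IN BN]
      n3 nodd mn Rn1 Rn by unfold_locales
  show ?thesis by (rule lhs_le_rhs[OF alpha_n dcond])
qed

end
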